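(* For every $k\in\mathbb{N}$ there exists a network with $O(k)$ vertices and $O(k)$ edges, a single commodity, a single externality class, and edge costs of the form $c^\lambda_e(x_e)=\tau_e(x_e)+g_e\lambda$ with affine travel times $\tau_e$ and constant externality factors $g_e\ge0$, such that the function $\lambda\mapsto x(\lambda)$ mapping $\lambda>0$ to the Wardrop equilibrium in this network has at least $2^{k+1}$ breakpoints.
   Context: A single commodity with source $s$, sink $t$ and demand $d>0$ routes flow in a directed graph $G=(V,E)$; for a price $\lambda\ge0$ each path $p$ has cost $\sum_{e\in p}c^\lambda_e(x_e)$ where $x_e$ is the edge load. A Wardrop equilibrium for $\lambda$ is a feasible $s$–$t$ flow of value $d$ in which only minimum-cost paths carry flow; $x(\lambda)$ denotes the equilibrium (edge flows). A breakpoint is a point where $\lambda\mapsto x(\lambda)$ changes from one affine piece to another. *)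

theory Defs
  imports Complex_Main
begin

text \<open>Edge cost for price lam: c_e(x_e) = ta e * x_e + tb e + gf e * lam, i.e. affine travel
  time tau_e(x) = ta e * x + tb e plus constant externality factor gf e times lam.\<close>

record network =
  verts :: "nat set"
  edges :: "nat set"
  etail :: "nat \<Rightarrow> nat"
  ehead :: "nat \<Rightarrow> nat"
  src   :: nat
  snk   :: nat
  dem   :: real
  ta    :: "nat \<Rightarrow> real"
  tb    :: "nat \<Rightarrow> real"
  gf    :: "nat \<Rightarrow> real"

definition valid_network :: "network \<Rightarrow> bool" where
  "valid_network N \<longleftrightarrow>
     finite (verts N) \<and> finite (edges N) \<and>
     (\<forall>e\<in>edges N. etail N e \<in> verts N \<and> ehead N e \<in> verts N) \<and>
     src N \<in> verts N \<and> snk N \<in> verts N \<and> src N \<noteq> snk N \<and> dem N > 0 \<and>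
     (\<forall>e\<in>edges N. ta N e \<ge> 0 \<and> tb N e \<ge> 0 \<and> gf N e \<ge> 0)"

definition is_st_path :: "network \<Rightarrow> nat list \<Rightarrow> bool" where
  "is_st_path N p \<longleftrightarrow>
     p \<noteq> [] \<and> set p \<subseteq> edges N \<and>
     etail N (hd p) = src N \<and> ehead N (last p) = snk N \<and>
     (\<forall>i. Suc i < length p \<longrightarrow> ehead N (p ! i) = etail N (p ! Suc i)) \<and>
     distinct (etail N (hd p) # map (ehead N) p)"

definition st_paths :: "network \<Rightarrow> nat list set" where
  "st_paths N = {p. is_st_path N p}"

definition edge_cost :: "network \<Rightarrow> real \<Rightarrow> (nat \<Rightarrow> real) \<Rightarrow> nat \<Rightarrow> real" where
  "edge_cost N lam x e = ta N e * x e + tb N e + gf N e * lam"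

definition path_cost :: "network \<Rightarrow> real \<Rightarrow> (nat \<Rightarrow> real) \<Rightarrow> nat list \<Rightarrow> real" where
  "path_cost N lam x p = (\<Sum>e\<leftarrow>p. edge_cost N lam x e)"

definition wardrop_eq :: "network \<Rightarrow> real \<Rightarrow> (nat \<Rightarrow> real) \<Rightarrow> bool" where
  "wardrop_eq N lam x \<longleftrightarrow>
     (\<exists>f :: nat list \<Rightarrow> real.
        (\<forall>p\<in>st_paths N. f p \<ge> 0) \<and>
        (\<Sum>p\<in>st_paths N. f p) = dem N \<and>
        (\<forall>e. x e = (\<Sum>p\<in>{p\<in>st_paths N. e \<in> set p}. f p)) \<and>
        (\<forall>p\<in>st_paths N. f p > 0 \<longrightarrow>
            (\<forall>q\<in>st_paths N. path_cost N lam x p \<le> path_cost N lam x q)))"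

definition breakpoint :: "network \<Rightarrow> (real \<Rightarrow> nat \<Rightarrow> real) \<Rightarrow> real \<Rightarrow> bool" where
  "breakpoint N x lam0 \<longleftrightarrow> lam0 > 0 \<and>
     \<not> (\<exists>\<epsilon>>0. \<exists>p q :: nat \<Rightarrow> real. \<forall>lam. \<bar>lam - lam0\<bar> < \<epsilon> \<longrightarrow>
            (\<forall>e\<in>edges N. x lam e = p e + q e * lam))"

end

theory Submission
  imports Defs "HOL-Analysis.Lipschitz"
begin

text \<open>The network is obtained by iterating a Braess-type gadget. Wrapped into the gadget with offset
  \<open>b\<close>, a network with equilibrium cost \<open>c\<close> receives, as a function of the outer demand \<open>D\<close>, the
  whole demand up to the saturation demand \<open>s\<close> (where \<open>2s + c s = b\<close>), then a strictly
  decreasing share that vanishes at \<open>D = 2b\<close>. So each breakpoint \<open>d < s\<close> of the inner flow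
  reappears twice in the outer flow, at \<open>d\<close> and on the decreasing branch, and \<open>s\<close> is a new one:
  \<open>n\<close> breakpoints become \<open>2n + 1\<close>. A source joined to the level-\<open>K\<close> network by an edge of cost
  \<open>x + \<lambda>\<close> and to its sink by an edge of cost \<open>x\<close> turns the demand into a strictly decreasing
  function of \<open>\<lambda>\<close>, so the \<open>2\<^sup>K - 1\<close> breakpoints become breakpoints of \<open>\<lambda> \<mapsto> x(\<lambda>)\<close>.
  Equilibria are verified by node potentials and are unique since all travel times are strictly
  increasing.\<close>

section \<open>Equilibria certified by potentials\<close>

lemma is_st_path_distinct: "is_st_path N p \<Longrightarrow> distinct p"
  unfolding is_st_path_def by (auto dest: distinct_map[THEN iffD1])

lemma is_st_path_successively:
  "is_st_path N p \<Longrightarrow> successively (\<lambda>a b. ehead N a = etail N b) p"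
  unfolding is_st_path_def successively_conv_nth by auto

lemma finite_st_paths:
  assumes "valid_network N"
  shows "finite (st_paths N)"
proof (rule finite_subset)
  show "st_paths N \<subseteq> {p. set p \<subseteq> edges N \<and> distinct p}"
    using is_st_path_distinct by (auto simp: st_paths_def is_st_path_def)
  show "finite {p. set p \<subseteq> edges N \<and> distinct p}"
    using assms by (intro finite_subset_distinct) (simp add: valid_network_def)
qed

lemma sum_list_telescope:
  fixes \<phi> :: "'b \<Rightarrow> 'c::ab_group_add"
  assumes "successively (\<lambda>a b. v a = u b) p" "p \<noteq> []"
  shows "(\<Sum>e\<leftarrow>p. \<phi> (v e) - \<phi> (u e)) = \<phi> (v (last p)) - \<phi> (u (hd p))"
  using assms by (induction p rule: induct_list012) auto

lemma list_eq_hd_butlast_tl_last: "p \<noteq> [] \<Longrightarrow> hd p \<noteq> last p \<Longrightarrow> p = hd p # butlast (tl p) @ [last p]"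
  by (cases p) (auto split: if_splits)

lemma potential_diff_eq_sum_list:
  fixes \<pi> :: "nat \<Rightarrow> 'a::ab_group_add"
  assumes "is_st_path N p"
  shows "\<pi> (snk N) - \<pi> (src N) = (\<Sum>e\<leftarrow>p. \<pi> (ehead N e) - \<pi> (etail N e))"
  using sum_list_telescope[OF is_st_path_successively[OF assms], of \<pi>] assms
  by (simp add: is_st_path_def)

lemma path_cost_ge_potential_diff:
  assumes "is_st_path N p"
    and "\<forall>e\<in>edges N. \<pi> (ehead N e) \<le> \<pi> (etail N e) + edge_cost N lam x e"
  shows "\<pi> (snk N) - \<pi> (src N) \<le> path_cost N lam x p"
  unfolding potential_diff_eq_sum_list[OF assms(1)] path_cost_def
proof (rule sum_list_mono)
  fix e assume "e \<in> set p"
  then have "e \<in> edges N" using assms(1) by (auto simp: is_st_path_def)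
  then show "\<pi> (ehead N e) - \<pi> (etail N e) \<le> edge_cost N lam x e" using assms(2) by fastforce
qed

lemma path_cost_eq_potential_diff:
  assumes "is_st_path N p"
    and "\<forall>e\<in>set p. \<pi> (ehead N e) = \<pi> (etail N e) + edge_cost N lam x e"
  shows "path_cost N lam x p = \<pi> (snk N) - \<pi> (src N)"
  unfolding potential_diff_eq_sum_list[OF assms(1)] path_cost_def
  using assms(2) by (intro arg_cong[where f = sum_list] map_cong) auto

lemma wardrop_eq_if_tight_potential:
  assumes valid: "valid_network N"
    and P: "finite P" "P \<subseteq> st_paths N"
    and f_out: "\<forall>p. p \<notin> P \<longrightarrow> f p = 0" and f_nonneg: "\<forall>p. 0 \<le> f p"
    and f_sum: "sum f P = dem N"
    and x_eq: "\<forall>e. x e = (\<Sum>p\<in>P. if e \<in> set p then f p else 0)"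
    and feasible: "\<forall>e\<in>edges N. \<pi> (ehead N e) \<le> \<pi> (etail N e) + edge_cost N lam x e"
    and tight: "\<forall>e\<in>edges N. x e > 0 \<longrightarrow> \<pi> (ehead N e) = \<pi> (etail N e) + edge_cost N lam x e"
  shows "wardrop_eq N lam x"
  unfolding wardrop_eq_def
proof (intro exI conjI ballI allI impI)
  have fin: "finite (st_paths N)" using finite_st_paths[OF valid] .
  have extend: "(\<Sum>p\<in>P. g p) = (\<Sum>p\<in>st_paths N. g p)" if "\<forall>p. p \<notin> P \<longrightarrow> g p = 0" for g
    using sum.mono_neutral_right[OF fin P(2), of g] that by auto
  show "0 \<le> f p" for p using f_nonneg by auto
  show "sum f (st_paths N) = dem N" using f_sum extend[of f] f_out by simp
  show "x e = sum f {p \<in> st_paths N. e \<in> set p}" for e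
    using x_eq extend[of "\<lambda>p. if e \<in> set p then f p else 0"] f_out fin
    by (simp add: sum.inter_filter)
  fix p q assume p: "p \<in> st_paths N" and fp: "0 < f p" and q: "q \<in> st_paths N"
  have "p \<in> P" using f_out fp by force
  have "\<pi> (ehead N e) = \<pi> (etail N e) + edge_cost N lam x e" if e: "e \<in> set p" for e
  proof -
    have "f p = (\<Sum>p'\<in>{p}. if e \<in> set p' then f p' else 0)" using e by simp
    also have "\<dots> \<le> (\<Sum>p'\<in>P. if e \<in> set p' then f p' else 0)"
      by (rule sum_mono2) (use P \<open>p \<in> P\<close> f_nonneg in auto)
    finally have "x e > 0" using x_eq fp by simp
    moreover have "e \<in> edges N" using p e by (auto simp: st_paths_def is_st_path_def)
    ultimately show ?thesis using tight by auto
  qed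
  then have "path_cost N lam x p = \<pi> (snk N) - \<pi> (src N)"
    using p path_cost_eq_potential_diff by (auto simp: st_paths_def)
  also have "\<dots> \<le> path_cost N lam x q"
    using path_cost_ge_potential_diff q feasible by (auto simp: st_paths_def)
  finally show "path_cost N lam x p \<le> path_cost N lam x q" .
qed

lemma sum_edges_eq_sum_paths:
  fixes h :: "'a list \<Rightarrow> 'b::comm_ring"
  assumes fin: "finite S" "finite E" and SE: "\<forall>p\<in>S. distinct p \<and> set p \<subseteq> E"
    and y: "\<forall>e. y e = sum h {p\<in>S. e \<in> set p}"
  shows "(\<Sum>e\<in>E. w e * y e) = (\<Sum>p\<in>S. h p * (\<Sum>e\<leftarrow>p. w e))"
proof -
  have "(\<Sum>e\<in>E. w e * y e) = (\<Sum>e\<in>E. \<Sum>p\<in>S. if e \<in> set p then w e * h p else 0)"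
    using fin y by (simp add: sum.inter_filter sum_distrib_left if_distrib cong: if_cong)
  also have "\<dots> = (\<Sum>p\<in>S. \<Sum>e\<in>E. if e \<in> set p then w e * h p else 0)"
    by (rule sum.swap)
  also have "\<dots> = (\<Sum>p\<in>S. \<Sum>e\<in>set p. w e * h p)"
  proof (rule sum.cong[OF refl])
    fix p assume "p \<in> S"
    then have "{e\<in>E. e \<in> set p} = set p" using SE by auto
    then show "(\<Sum>e\<in>E. if e \<in> set p then w e * h p else 0) = (\<Sum>e\<in>set p. w e * h p)"
      using fin by (simp add: sum.inter_filter[symmetric])
  qed
  also have "\<dots> = (\<Sum>p\<in>S. h p * (\<Sum>e\<leftarrow>p. w e))"
    using SE by (auto simp: sum_list_distinct_conv_sum_set sum_distrib_left mult.commute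
        intro!: sum.cong)
  finally show ?thesis .
qed

lemma wardrop_eq_variational_ineq:
  assumes valid: "valid_network N" and x: "wardrop_eq N lam x" and y: "wardrop_eq N lam y"
  shows "(\<Sum>e\<in>edges N. edge_cost N lam x e * x e) \<le> (\<Sum>e\<in>edges N. edge_cost N lam x e * y e)"
proof -
  let ?S = "st_paths N" and ?cost = "path_cost N lam x"
  have finS: "finite ?S" using finite_st_paths[OF valid] .
  have finE: "finite (edges N)" using valid by (simp add: valid_network_def)
  have SE: "\<forall>p\<in>?S. distinct p \<and> set p \<subseteq> edges N"
    using is_st_path_distinct by (auto simp: st_paths_def is_st_path_def)
  obtain f where f_nonneg: "\<forall>p\<in>?S. 0 \<le> f p" and f_sum: "sum f ?S = dem N"
    and x_eq: "\<forall>e. x e = sum f {p\<in>?S. e \<in> set p}"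
    and f_min: "\<forall>p\<in>?S. f p > 0 \<longrightarrow> (\<forall>q\<in>?S. ?cost p \<le> ?cost q)"
    using x unfolding wardrop_eq_def by blast
  obtain h where h_nonneg: "\<forall>p\<in>?S. 0 \<le> h p" and h_sum: "sum h ?S = dem N"
    and y_eq: "\<forall>e. y e = sum h {p\<in>?S. e \<in> set p}"
    using y unfolding wardrop_eq_def by blast
  have "dem N > 0" using valid by (simp add: valid_network_def)
  then obtain p0 where p0: "p0 \<in> ?S" "f p0 > 0"
    using f_sum f_nonneg by (metis not_less sum_nonpos)
  define m where "m = ?cost p0"
  have m_le: "\<forall>q\<in>?S. m \<le> ?cost q" using f_min p0 m_def by auto
  have f_used: "f p * ?cost p = f p * m" if p: "p \<in> ?S" for p
  proof (cases "f p > 0")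
    case True
    then have "?cost p \<le> m" using f_min p p0 m_def by auto
    with m_le p show ?thesis by (metis order_antisym)
  next
    case False
    then show ?thesis using f_nonneg p by force
  qed
  have "(\<Sum>e\<in>edges N. edge_cost N lam x e * x e) = (\<Sum>p\<in>?S. f p * ?cost p)"
    using sum_edges_eq_sum_paths[OF finS finE SE x_eq] by (simp add: path_cost_def)
  also have "\<dots> = (\<Sum>p\<in>?S. f p * m)" using f_used by (rule sum.cong[OF refl])
  also have "\<dots> = m * dem N" using f_sum by (simp add: sum_distrib_right[symmetric])
  also have "\<dots> = (\<Sum>p\<in>?S. h p * m)" using h_sum by (simp add: sum_distrib_right[symmetric])
  also have "\<dots> \<le> (\<Sum>p\<in>?S. h p * ?cost p)"
    by (rule sum_mono) (use h_nonneg m_le in \<open>auto intro: mult_left_mono\<close>)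
  also have "\<dots> = (\<Sum>e\<in>edges N. edge_cost N lam x e * y e)"
    using sum_edges_eq_sum_paths[OF finS finE SE y_eq] by (simp add: path_cost_def)
  finally show ?thesis .
qed

text \<open>Adding the two variational inequalities gives \<open>\<Sum>e. ta e * (x e - y e)\<^sup>2 \<le> 0\<close>.\<close>

lemma wardrop_eq_unique:
  assumes valid: "valid_network N" and ta_pos: "\<forall>e\<in>edges N. ta N e > 0"
    and x: "wardrop_eq N lam x" and y: "wardrop_eq N lam y"
  shows "\<forall>e\<in>edges N. y e = x e"
proof -
  let ?d = "\<lambda>e. ta N e * (x e - y e)\<^sup>2"
  have finE: "finite (edges N)" using valid by (simp add: valid_network_def)
  have "(\<Sum>e\<in>edges N. ?d e) =
     (\<Sum>e\<in>edges N. edge_cost N lam x e * x e) - (\<Sum>e\<in>edges N. edge_cost N lam x e * y e)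
     + ((\<Sum>e\<in>edges N. edge_cost N lam y e * y e) - (\<Sum>e\<in>edges N. edge_cost N lam y e * x e))"
    by (simp add: sum_subtractf[symmetric] sum.distrib[symmetric] edge_cost_def
        power2_eq_square algebra_simps)
  also have "\<dots> \<le> 0"
    using wardrop_eq_variational_ineq[OF valid x y] wardrop_eq_variational_ineq[OF valid y x]
    by linarith
  finally have "(\<Sum>e\<in>edges N. ?d e) \<le> 0" .
  moreover have "\<forall>e\<in>edges N. 0 \<le> ?d e" using ta_pos by (auto intro: less_imp_le)
  ultimately have "\<forall>e\<in>edges N. ?d e = 0"
    using sum_nonneg_eq_0_iff[OF finE, of ?d] by (metis (no_types, lifting) antisym sum_nonneg)
  then show ?thesis
    using ta_pos by (metis less_irrefl mult_eq_0_iff power_eq_0_iff right_minus_eq)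
qed

section \<open>Local affinity\<close>

definition affine_near :: "nat set \<Rightarrow> (real \<Rightarrow> nat \<Rightarrow> real) \<Rightarrow> real \<Rightarrow> bool" where
  "affine_near E Y l0 \<longleftrightarrow> (\<exists>\<epsilon>>0. \<exists>p q :: nat \<Rightarrow> real.
     \<forall>l. \<bar>l - l0\<bar> < \<epsilon> \<longrightarrow> (\<forall>e\<in>E. Y l e = p e + q e * l))"

lemma breakpoint_iff_not_affine_near:
  "breakpoint N x l \<longleftrightarrow> 0 < l \<and> \<not> affine_near (edges N) x l"
  unfolding breakpoint_def affine_near_def by blast

lemma affine_near_through_affine:
  assumes "0 < \<delta>" "\<beta> \<noteq> 0"
    and \<phi>: "\<And>l. \<bar>l - l0\<bar> < \<delta> \<Longrightarrow> \<phi> l = \<alpha> + \<beta> * l"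
    and Z: "\<And>l e. \<bar>l - l0\<bar> < \<delta> \<Longrightarrow> e \<in> E \<Longrightarrow> Z (\<phi> l) e = p e + q e * l"
  shows "affine_near E Z (\<phi> l0)"
proof -
  have "Z m e = (p e - q e * \<alpha> / \<beta>) + (q e / \<beta>) * m"
    if m: "\<bar>m - \<phi> l0\<bar> < \<bar>\<beta>\<bar> * \<delta>" and e: "e \<in> E" for m e
  proof -
    define l where "l = (m - \<alpha>) / \<beta>"
    have "\<bar>l - l0\<bar> = \<bar>m - \<phi> l0\<bar> / \<bar>\<beta>\<bar>"
      using \<phi>[of l0] assms(1,2) by (simp add: l_def field_simps abs_divide)
    also have "\<dots> < \<delta>" using m assms(2) by (simp add: divide_less_eq mult.commute)
    finally have l: "\<bar>l - l0\<bar> < \<delta>" .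
    have "Z m e = Z (\<phi> l) e" using \<phi>[OF l] assms(2) by (simp add: l_def)
    also have "\<dots> = p e + q e * l" using Z l e by simp
    finally show ?thesis using assms(2) by (simp add: l_def field_simps)
  qed
  then show ?thesis
    unfolding affine_near_def using assms(1,2)
    by (intro exI[of _ "\<bar>\<beta>\<bar> * \<delta>"] conjI exI[of _ "\<lambda>e. p e - q e * \<alpha> / \<beta>"] exI[of _ "\<lambda>e. q e / \<beta>"])
      auto
qed

text \<open>Being a fixed linear combination of the values of \<open>Y\<close>, \<open>\<phi>\<close> is affine wherever \<open>Y\<close> is,
  with nonzero slope by injectivity; inverting it transports affinity from \<open>Y\<close> to \<open>Z\<close>.\<close>

lemma affine_near_reparam:
  assumes affine: "affine_near E Y l0" and "E' \<subseteq> E" and "F \<subseteq> E"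
    and "0 < \<eta>" and inj: "inj_on \<phi> {l. \<bar>l - l0\<bar> < \<eta>}"
    and Y_eq: "\<forall>l. \<bar>l - l0\<bar> < \<eta> \<longrightarrow> (\<forall>e\<in>E'. Y l e = Z (\<phi> l) e)"
    and \<phi>_eq: "\<forall>l. \<bar>l - l0\<bar> < \<eta> \<longrightarrow> \<phi> l = (\<Sum>e\<in>F. w e * Y l e)"
  shows "affine_near E' Z (\<phi> l0)"
proof -
  obtain \<epsilon> p q where "0 < \<epsilon>" and pq: "\<forall>l. \<bar>l - l0\<bar> < \<epsilon> \<longrightarrow> (\<forall>e\<in>E. Y l e = p e + q e * l)"
    using affine unfolding affine_near_def by blast
  define \<delta> where "\<delta> = min \<epsilon> \<eta>"
  define \<alpha> where "\<alpha> = (\<Sum>e\<in>F. w e * p e)"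
  define \<beta> where "\<beta> = (\<Sum>e\<in>F. w e * q e)"
  have "0 < \<delta>" using \<open>0 < \<epsilon>\<close> \<open>0 < \<eta>\<close> by (simp add: \<delta>_def)
  have Y_affine: "Y l e = p e + q e * l" if "\<bar>l - l0\<bar> < \<delta>" "e \<in> E" for l e
    using pq that by (simp add: \<delta>_def)
  have \<phi>_affine: "\<phi> l = \<alpha> + \<beta> * l" if l: "\<bar>l - l0\<bar> < \<delta>" for l
  proof -
    have "\<phi> l = (\<Sum>e\<in>F. w e * (p e + q e * l))"
      using \<phi>_eq Y_affine[OF l] l \<open>F \<subseteq> E\<close> by (auto simp: \<delta>_def intro!: sum.cong)
    then show ?thesis
      by (simp add: \<alpha>_def \<beta>_def distrib_left sum.distrib sum_distrib_right mult.assoc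
          mult.left_commute)
  qed
  have "\<beta> \<noteq> 0"
  proof
    assume "\<beta> = 0"
    then have "\<phi> l0 = \<phi> (l0 + \<delta>/2)" using \<phi>_affine \<open>0 < \<delta>\<close> by simp
    moreover have "l0 \<in> {l. \<bar>l - l0\<bar> < \<eta>}" "l0 + \<delta>/2 \<in> {l. \<bar>l - l0\<bar> < \<eta>}"
      using \<open>0 < \<delta>\<close> \<open>0 < \<eta>\<close> by (auto simp: \<delta>_def)
    ultimately show False using inj \<open>0 < \<delta>\<close> by (auto dest: inj_onD)
  qed
  show ?thesis
  proof (rule affine_near_through_affine[OF \<open>0 < \<delta>\<close> \<open>\<beta> \<noteq> 0\<close> \<phi>_affine])
    fix l e assume l: "\<bar>l - l0\<bar> < \<delta>" and e: "e \<in> E'"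
    have "Z (\<phi> l) e = Y l e" using Y_eq l e by (simp add: \<delta>_def)
    also have "\<dots> = p e + q e * l" using Y_affine l e \<open>E' \<subseteq> E\<close> by auto
    finally show "Z (\<phi> l) e = p e + q e * l" .
  qed
qed

section \<open>The gadget\<close>

locale cost_curve =
  fixes c :: "real \<Rightarrow> real"
  assumes zero [simp]: "c 0 = 0" and mono: "mono_on {0..} c" and cont: "continuous_on {0..} c"
begin

lemma nonneg: "0 \<le> x \<Longrightarrow> 0 \<le> c x"
  using mono_onD[OF mono, of 0 x] by simp

lemma mono_le: "0 \<le> x \<Longrightarrow> x \<le> y \<Longrightarrow> c x \<le> c y"
  using mono_onD[OF mono] by simp

lemma strict_mono_on_lin_comb:
  assumes "0 < a" "0 \<le> \<beta>"
  shows "strict_mono_on {0..} (\<lambda>d. a * d + \<beta> * c d)"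
proof (rule strict_mono_onI)
  fix x y :: real assume "x \<in> {0..}" "x < y"
  then have "\<beta> * c x \<le> \<beta> * c y" using mono_le assms(2) by (simp add: mult_left_mono)
  moreover have "a * x < a * y" using \<open>x < y\<close> assms(1) by simp
  ultimately show "a * x + \<beta> * c x < a * y + \<beta> * c y" by linarith
qed

lemma inj_on_lin_comb:
  "0 < a \<Longrightarrow> 0 \<le> \<beta> \<Longrightarrow> inj_on (\<lambda>d. a * d + \<beta> * c d) {0..}"
  using strict_mono_on_lin_comb by (rule strict_mono_on_imp_inj_on)

lemma the_inv_into_lin_comb:
  assumes "0 < a" "0 \<le> \<beta>" "0 \<le> y"
  defines "d \<equiv> the_inv_into {0..} (\<lambda>d. a * d + \<beta> * c d) y"
  shows "0 \<le> d" and "a * d + \<beta> * c d = y"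
proof -
  let ?h = "\<lambda>d. a * d + \<beta> * c d"
  have "continuous_on {0..y/a} ?h"
    by (intro continuous_intros continuous_on_subset[OF cont]) auto
  moreover have "y \<le> ?h (y/a)" using assms nonneg[of "y/a"] by simp
  ultimately obtain t where "0 \<le> t" "?h t = y"
    using IVT'[of ?h 0 y "y/a"] assms by auto
  then have "y \<in> ?h ` {0..}" by auto
  then show "0 \<le> d" "?h d = y"
    unfolding d_def using the_inv_into_into[OF inj_on_lin_comb[OF assms(1,2)], of y "{0..}"]
      f_the_inv_into_f[OF inj_on_lin_comb[OF assms(1,2)]] by auto
qed

lemma the_inv_into_lin_comb_eq:
  "0 < a \<Longrightarrow> 0 \<le> \<beta> \<Longrightarrow> 0 \<le> d \<Longrightarrow> the_inv_into {0..} (\<lambda>d. a * d + \<beta> * c d) (a * d + \<beta> * c d) = d"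
  using the_inv_into_f_f[OF inj_on_lin_comb] by simp

lemma lin_comb_less_2_1: "0 \<le> x \<Longrightarrow> x < y \<Longrightarrow> 2 * x + c x < 2 * y + c y"
  using strict_mono_on_lin_comb[of 2 1] by (simp add: strict_mono_on_def)

lemma lin_comb_less_3_2: "0 \<le> x \<Longrightarrow> x < y \<Longrightarrow> 3 * x + 2 * c x < 3 * y + 2 * c y"
  using strict_mono_on_lin_comb[of 3 2] by (simp add: strict_mono_on_def)

end

text \<open>The gadget wraps an inner network with terminals \<open>s, t\<close> and equilibrium cost \<open>c\<close> into one
  with new terminals \<open>s', t'\<close>: edges \<open>s' \<rightarrow> s\<close> and \<open>t \<rightarrow> t'\<close> of cost \<open>2x\<close> and bypass edges
  \<open>s \<rightarrow> t'\<close>, \<open>s' \<rightarrow> t\<close> of cost \<open>x + b\<close>. If \<open>d\<close> of the demand \<open>D\<close> passes the inner network, each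
  bypass path carries \<open>(D - d)/2\<close>, so the inner route costs \<open>2(D + d) + c d\<close> and a bypass path
  \<open>(D + d) + (D - d)/2 + b\<close>. Hence all of \<open>D\<close> goes inside while \<open>2D + c D \<le> b\<close>, then \<open>d\<close> solves
  \<open>3d + 2 c d = 2b - D\<close> until it vanishes at \<open>D = 2b\<close>.\<close>

definition saturation_demand :: "(real \<Rightarrow> real) \<Rightarrow> real \<Rightarrow> real" where
  "saturation_demand c b = the_inv_into {0..} (\<lambda>d. 2 * d + c d) b"

definition inner_demand :: "(real \<Rightarrow> real) \<Rightarrow> real \<Rightarrow> real \<Rightarrow> real" where
  "inner_demand c b D =
     (if 2 * D + c D \<le> b then D
      else if D < 2 * b then the_inv_into {0..} (\<lambda>d. 3 * d + 2 * c d) (2 * b - D) else 0)"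

definition gadget_cost :: "(real \<Rightarrow> real) \<Rightarrow> real \<Rightarrow> real \<Rightarrow> real" where
  "gadget_cost c b D =
     (if 2 * D + c D \<le> b then 4 * D + c D else 3 * D / 2 + inner_demand c b D / 2 + b)"

definition outer_demand :: "(real \<Rightarrow> real) \<Rightarrow> real \<Rightarrow> real \<Rightarrow> real" where
  "outer_demand c b d = 2 * b - 3 * d - 2 * c d"

locale gadget = cost_curve +
  fixes b :: real
  assumes b_pos: "0 < b"
begin

lemma saturation_demand: "0 \<le> saturation_demand c b" "2 * saturation_demand c b + c (saturation_demand c b) = b"
  using the_inv_into_lin_comb[of 2 1 b] b_pos by (simp_all add: saturation_demand_def)

lemma saturation_demand_pos: "0 < saturation_demand c b"
  using saturation_demand b_pos by (cases "saturation_demand c b = 0") auto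

lemma saturation_demand_less: "saturation_demand c b < 2 * b"
  using saturation_demand saturation_demand_pos nonneg[of "saturation_demand c b"] by linarith

lemma saturated_iff: "0 \<le> D \<Longrightarrow> 2 * D + c D \<le> b \<longleftrightarrow> D \<le> saturation_demand c b"
  using lin_comb_less_2_1[of D "saturation_demand c b"] lin_comb_less_2_1[of "saturation_demand c b" D]
    saturation_demand by force

lemma inner_demand_saturated: "0 \<le> D \<Longrightarrow> D \<le> saturation_demand c b \<Longrightarrow> inner_demand c b D = D"
  using saturated_iff by (simp add: inner_demand_def)

lemma inner_demand_eq_0: "2 * b \<le> D \<Longrightarrow> inner_demand c b D = 0"
  using nonneg[of D] b_pos by (simp add: inner_demand_def)

lemma inner_demand_split:
  assumes "saturation_demand c b \<le> D" "D \<le> 2 * b"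
  shows "0 \<le> inner_demand c b D" "3 * inner_demand c b D + 2 * c (inner_demand c b D) = 2 * b - D"
proof -
  let ?d = "inner_demand c b D"
  have "0 \<le> D" using assms(1) saturation_demand by linarith
  consider "D = saturation_demand c b" | "saturation_demand c b < D \<and> D < 2 * b" | "D = 2 * b"
    using assms by linarith
  then have "0 \<le> ?d \<and> 3 * ?d + 2 * c ?d = 2 * b - D"
  proof cases
    case 1
    then show ?thesis using inner_demand_saturated saturation_demand by simp
  next
    case 2
    then have "\<not> 2 * D + c D \<le> b" using saturated_iff \<open>0 \<le> D\<close> by simp
    then show ?thesis using 2 the_inv_into_lin_comb[of 3 2 "2 * b - D"] by (simp add: inner_demand_def)
  next
    case 3
    then show ?thesis using inner_demand_eq_0 by simp
  qed
  then show "0 \<le> ?d" "3 * ?d + 2 * c ?d = 2 * b - D" by simp_all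
qed

lemma inner_demand_le_saturation:
  assumes "saturation_demand c b \<le> D" "D \<le> 2 * b"
  shows "inner_demand c b D \<le> saturation_demand c b"
proof (rule ccontr)
  assume "\<not> ?thesis"
  then have "3 * saturation_demand c b + 2 * c (saturation_demand c b)
      < 3 * inner_demand c b D + 2 * c (inner_demand c b D)"
    using lin_comb_less_3_2 saturation_demand by simp
  then show False using inner_demand_split[OF assms] saturation_demand assms(1) by linarith
qed

lemma inner_demand_bounds: "0 \<le> D \<Longrightarrow> 0 \<le> inner_demand c b D \<and> inner_demand c b D \<le> D"
  using inner_demand_saturated[of D] inner_demand_split[of D] inner_demand_le_saturation[of D]
    inner_demand_eq_0[of D] by force

lemma inner_demand_antimono:
  assumes "saturation_demand c b \<le> D1" "D1 \<le> D2"
  shows "inner_demand c b D2 \<le> inner_demand c b D1"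
    and "inner_demand c b D1 - inner_demand c b D2 \<le> (D2 - D1) / 3"
proof -
  let ?d1 = "inner_demand c b D1" and ?d2 = "inner_demand c b D2"
  have "?d2 \<le> ?d1 \<and> ?d1 - ?d2 \<le> (D2 - D1) / 3"
  proof (cases "D2 \<le> 2 * b")
    case True
    note d1 = inner_demand_split[of D1] and d2 = inner_demand_split[of D2]
    have "?d2 \<le> ?d1"
      using lin_comb_less_3_2[of ?d1 ?d2] d1 d2 assms True by force
    moreover have "c ?d2 \<le> c ?d1" using mono_le calculation d2 assms True by simp
    ultimately show ?thesis using d1(2) d2(2) assms True by simp
  next
    case False
    then have "?d2 = 0" using inner_demand_eq_0 by simp
    moreover have "?d1 \<le> (D2 - D1) / 3 \<and> 0 \<le> ?d1"
    proof (cases "D1 \<le> 2 * b")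
      case True
      then show ?thesis using inner_demand_split[OF assms(1)] nonneg[of ?d1] False by simp
    qed (use inner_demand_eq_0 assms in simp)
    ultimately show ?thesis by simp
  qed
  then show "?d2 \<le> ?d1" "?d1 - ?d2 \<le> (D2 - D1) / 3" by simp_all
qed

lemma inner_demand_strict_antimono:
  assumes "saturation_demand c b \<le> D1" "D1 < D2" "D2 \<le> 2 * b"
  shows "inner_demand c b D2 < inner_demand c b D1"
proof (rule ccontr)
  let ?d1 = "inner_demand c b D1" and ?d2 = "inner_demand c b D2"
  assume "\<not> ?d2 < ?d1"
  then have "c ?d1 \<le> c ?d2" using mono_le inner_demand_split[of D1] assms by simp
  then show False using \<open>\<not> ?d2 < ?d1\<close> inner_demand_split[of D1] inner_demand_split[of D2] assms
    by linarith
qed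

lemma outer_demand:
  assumes "0 < d" "d < saturation_demand c b"
  shows "saturation_demand c b < outer_demand c b d" "outer_demand c b d < 2 * b"
    and "inner_demand c b (outer_demand c b d) = d"
proof -
  show lo: "saturation_demand c b < outer_demand c b d"
    using lin_comb_less_3_2[of d "saturation_demand c b"] assms saturation_demand
    by (simp add: outer_demand_def)
  show hi: "outer_demand c b d < 2 * b"
    using nonneg[of d] assms by (simp add: outer_demand_def)
  let ?t = "inner_demand c b (outer_demand c b d)"
  have "0 \<le> ?t" "3 * ?t + 2 * c ?t = 3 * d + 2 * c d"
    using inner_demand_split[OF less_imp_le[OF lo] less_imp_le[OF hi]]
    by (simp_all add: outer_demand_def)
  then show "?t = d"
    using inj_onD[OF inj_on_lin_comb[of 3 2], of ?t d] assms by simp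
qed

lemma inj_on_outer_demand: "inj_on (outer_demand c b) {0..}"
  using inj_on_lin_comb[of 3 2] by (auto simp: inj_on_def outer_demand_def)

lemma gadget_cost_saturated:
  "0 \<le> D \<Longrightarrow> D \<le> saturation_demand c b \<Longrightarrow> gadget_cost c b D = 4 * D + c D"
  using saturated_iff by (simp add: gadget_cost_def)

lemma gadget_cost_split:
  assumes "saturation_demand c b \<le> D"
  shows "gadget_cost c b D = 3 * D / 2 + inner_demand c b D / 2 + b"
proof (cases "D = saturation_demand c b")
  case True
  then show ?thesis
    using gadget_cost_saturated inner_demand_saturated saturation_demand by simp
next
  case False
  then have "\<not> 2 * D + c D \<le> b"
    using saturated_iff assms saturation_demand by simp
  then show ?thesis by (simp add: gadget_cost_def)
qed

lemma gadget_cost_zero: "gadget_cost c b 0 = 0"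
  using gadget_cost_saturated[of 0] saturation_demand by simp

lemma gadget_cost_le: "0 \<le> D \<Longrightarrow> gadget_cost c b D \<le> 2 * D + b"
  using gadget_cost_saturated[of D] saturated_iff[of D] gadget_cost_split[of D]
    inner_demand_bounds[of D] by force

text \<open>Both regimes are Lipschitz (with slopes \<open>4 + L\<close> and 2); they meet at the saturation demand.\<close>

lemma gadget_cost_increment:
  assumes "0 \<le> x" "x \<le> y" and L: "L-lipschitz_on {0..} c"
  shows "0 \<le> gadget_cost c b y - gadget_cost c b x"
    and "gadget_cost c b y - gadget_cost c b x \<le> (4 + L) * (y - x)"
proof -
  let ?s = "saturation_demand c b" and ?C = "gadget_cost c b"
  have "0 \<le> L" using L by (rule lipschitz_on_nonneg)
  have low: "0 \<le> ?C v - ?C u \<and> ?C v - ?C u \<le> (4 + L) * (v - u)"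
    if "0 \<le> u" "u \<le> v" "v \<le> ?s" for u v
  proof -
    have "c v - c u \<le> L * (v - u)"
      using lipschitz_onD[OF L, of v u] that by (simp add: dist_real_def)
    then show ?thesis
      using gadget_cost_saturated[of u] gadget_cost_saturated[of v] mono_le[of u v] that
      by (simp add: algebra_simps)
  qed
  have high: "0 \<le> ?C v - ?C u \<and> ?C v - ?C u \<le> (4 + L) * (v - u)"
    if "?s \<le> u" "u \<le> v" for u v
  proof -
    have "?C v - ?C u \<le> 2 * (v - u)"
      using gadget_cost_split[of u] gadget_cost_split[of v] inner_demand_antimono[of u v] that
      by simp
    also have "\<dots> \<le> (4 + L) * (v - u)" using that \<open>0 \<le> L\<close> by (intro mult_right_mono) auto
    finally show ?thesis
      using gadget_cost_split[of u] gadget_cost_split[of v] inner_demand_antimono[of u v] that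
      by simp
  qed
  consider "y \<le> ?s" | "?s \<le> x" | "x < ?s" "?s < y" by linarith
  then have "0 \<le> ?C y - ?C x \<and> ?C y - ?C x \<le> (4 + L) * (y - x)"
  proof cases
    case 1
    then show ?thesis using low assms by simp
  next
    case 2
    then show ?thesis using high assms by simp
  next
    case 3
    then show ?thesis using low[of x ?s] high[of ?s y] assms by (simp add: algebra_simps)
  qed
  then show "0 \<le> ?C y - ?C x" "?C y - ?C x \<le> (4 + L) * (y - x)" by simp_all
qed

lemma mono_on_gadget_cost: "L-lipschitz_on {0..} c \<Longrightarrow> mono_on {0..} (gadget_cost c b)"
  using gadget_cost_increment(1) by (intro mono_onI) fastforce

lemma lipschitz_on_gadget_cost:
  assumes "L-lipschitz_on {0..} c"
  shows "(4 + L)-lipschitz_on {0..} (gadget_cost c b)"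
proof (rule lipschitz_on_leI)
  show "0 \<le> 4 + L" using lipschitz_on_nonneg[OF assms] by simp
  fix x y :: real assume "x \<in> {0..}" "y \<in> {0..}" "x \<le> y"
  then show "dist (gadget_cost c b x) (gadget_cost c b y) \<le> (4 + L) * dist x y"
    using gadget_cost_increment[of x y L] assms by (simp add: dist_real_def)
qed

lemma gadget_cost_eq_potential:
  assumes "0 \<le> D" and t_def: "t = inner_demand c b D"
    and \<pi>_def: "\<pi> = (if D < 2 * b then D + t + c t else D / 2 + b)"
  shows "gadget_cost c b D = \<pi> + D + t" and "\<pi> \<le> (D - t) / 2 + b"
    and "0 < D - t \<Longrightarrow> \<pi> = (D - t) / 2 + b"
proof -
  let ?s = "saturation_demand c b"
  have "gadget_cost c b D = \<pi> + D + t \<and> \<pi> \<le> (D - t) / 2 + b \<and> (0 < D - t \<longrightarrow> \<pi> = (D - t) / 2 + b)"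
  proof (cases "D \<le> ?s")
    case True
    then have "t = D" "2 * D + c D \<le> b" "D < 2 * b"
      using inner_demand_saturated saturated_iff saturation_demand_less assms(1)
      by (simp_all add: t_def)
    then show ?thesis using gadget_cost_saturated assms(1) True by (simp add: \<pi>_def)
  next
    case False
    then have cost: "gadget_cost c b D = 3 * D / 2 + t / 2 + b"
      using gadget_cost_split by (simp add: t_def)
    show ?thesis
    proof (cases "D < 2 * b")
      case True
      then have "3 * t + 2 * c t = 2 * b - D" using inner_demand_split False by (simp add: t_def)
      then show ?thesis using cost True by (simp add: \<pi>_def field_simps)
    next
      case False
      then show ?thesis using cost inner_demand_eq_0 by (simp add: \<pi>_def t_def)
    qed
  qed
  then show "gadget_cost c b D = \<pi> + D + t" "\<pi> \<le> (D - t) / 2 + b"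
    "0 < D - t \<Longrightarrow> \<pi> = (D - t) / 2 + b" by simp_all
qed

lemma inner_demand_not_affine_near_saturation:
  "\<not> (\<exists>\<epsilon>>0. \<exists>\<alpha> \<beta>. \<forall>l. \<bar>l - saturation_demand c b\<bar> < \<epsilon> \<longrightarrow> inner_demand c b l = \<alpha> + \<beta> * l)"
proof
  let ?s = "saturation_demand c b"
  assume "\<exists>\<epsilon>>0. \<exists>\<alpha> \<beta>. \<forall>l. \<bar>l - ?s\<bar> < \<epsilon> \<longrightarrow> inner_demand c b l = \<alpha> + \<beta> * l"
  then obtain \<epsilon> \<alpha> \<beta> where "0 < \<epsilon>" and affine: "\<And>l. \<bar>l - ?s\<bar> < \<epsilon> \<Longrightarrow> inner_demand c b l = \<alpha> + \<beta> * l"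
    by blast
  define \<delta> where "\<delta> = min \<epsilon> (min ?s (2 * b - ?s)) / 2"
  have "0 < \<delta>" "\<delta> \<le> \<epsilon> / 2" "\<delta> \<le> ?s / 2" "\<delta> \<le> (2 * b - ?s) / 2"
    using \<open>0 < \<epsilon>\<close> saturation_demand_pos saturation_demand_less by (auto simp: \<delta>_def min_def)
  then have \<delta>: "0 < \<delta>" "\<delta> < \<epsilon>" "\<delta> < ?s" "?s + \<delta> < 2 * b"
    using \<open>0 < \<epsilon>\<close> saturation_demand_pos saturation_demand_less by argo+
  have "inner_demand c b ?s = ?s" "inner_demand c b (?s - \<delta>) = ?s - \<delta>"
    using inner_demand_saturated \<delta> by simp_all
  then have "\<alpha> + \<beta> * ?s = ?s" "\<alpha> + \<beta> * (?s - \<delta>) = ?s - \<delta>"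
    using affine[of ?s] affine[of "?s - \<delta>"] \<delta> \<open>0 < \<epsilon>\<close> by simp_all
  then have "\<beta> = 1" "\<alpha> = 0" using \<delta> by (simp_all add: algebra_simps)
  then have "inner_demand c b (?s + \<delta>) = ?s + \<delta>" using affine[of "?s + \<delta>"] \<delta> by simp
  moreover have "inner_demand c b (?s + \<delta>) < inner_demand c b ?s"
    using inner_demand_strict_antimono[of ?s "?s + \<delta>"] \<delta> by simp
  ultimately show False using \<open>inner_demand c b ?s = ?s\<close> \<delta> by simp
qed

end

section \<open>The recursive network\<close>

text \<open>The network of level \<open>k\<close> has the
  vertices \<open>0, \<dots>, 2k + 1\<close> and the edges \<open>0, \<dots>, 4k\<close>: edge 0 joins \<open>src_vertex 0\<close> to
  \<open>snk_vertex 0\<close>, and level \<open>j + 1\<close> wraps level \<open>j\<close> into the gadget with the four edges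
  \<open>4j + 1, \<dots>, 4j + 4\<close> and the offset \<open>b = 16\<^sup>j\<^sup>+\<^sup>1\<close>.\<close>

definition src_vertex :: "nat \<Rightarrow> nat" where "src_vertex j = 2 * j"
definition snk_vertex :: "nat \<Rightarrow> nat" where "snk_vertex j = 2 * j + 1"

definition src_link :: "nat \<Rightarrow> nat" where "src_link j = 4 * j + 1"
definition src_bypass :: "nat \<Rightarrow> nat" where "src_bypass j = 4 * j + 2"
definition snk_bypass :: "nat \<Rightarrow> nat" where "snk_bypass j = 4 * j + 3"
definition snk_link :: "nat \<Rightarrow> nat" where "snk_link j = 4 * j + 4"

definition edge_tail :: "nat \<Rightarrow> nat" where
  "edge_tail e = (if e = 0 then src_vertex 0 else let j = (e - 1) div 4 in
     [src_vertex (Suc j), src_vertex j, src_vertex (Suc j), snk_vertex j] ! ((e - 1) mod 4))"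

definition edge_head :: "nat \<Rightarrow> nat" where
  "edge_head e = (if e = 0 then snk_vertex 0 else let j = (e - 1) div 4 in
     [src_vertex j, snk_vertex (Suc j), snk_vertex j, snk_vertex (Suc j)] ! ((e - 1) mod 4))"

definition edge_slope :: "nat \<Rightarrow> real" where
  "edge_slope e = (if e = 0 then 1 else [2, 1, 1, 2] ! ((e - 1) mod 4))"

definition edge_offset :: "nat \<Rightarrow> real" where
  "edge_offset e = (if e = 0 then 0 else let b = 16 ^ Suc ((e - 1) div 4) in
     [0, b, b, 0] ! ((e - 1) mod 4))"

definition level_verts :: "nat \<Rightarrow> nat set" where "level_verts k = {..2 * k + 1}"
definition level_edges :: "nat \<Rightarrow> nat set" where "level_edges k = {..4 * k}"

lemma edge_data [simp]:
  "edge_tail 0 = src_vertex 0" "edge_head 0 = snk_vertex 0"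
  "edge_slope 0 = 1" "edge_offset 0 = 0"
  "edge_tail (src_link j) = src_vertex (Suc j)" "edge_head (src_link j) = src_vertex j"
  "edge_slope (src_link j) = 2" "edge_offset (src_link j) = 0"
  "edge_tail (src_bypass j) = src_vertex j" "edge_head (src_bypass j) = snk_vertex (Suc j)"
  "edge_slope (src_bypass j) = 1" "edge_offset (src_bypass j) = 16 ^ Suc j"
  "edge_tail (snk_bypass j) = src_vertex (Suc j)" "edge_head (snk_bypass j) = snk_vertex j"
  "edge_slope (snk_bypass j) = 1" "edge_offset (snk_bypass j) = 16 ^ Suc j"
  "edge_tail (snk_link j) = snk_vertex j" "edge_head (snk_link j) = snk_vertex (Suc j)"
  "edge_slope (snk_link j) = 2" "edge_offset (snk_link j) = 0"
proof -
  have "Suc (4 * j) div 4 = j" "Suc (Suc (4 * j)) div 4 = j" "Suc (Suc (Suc (4 * j))) div 4 = j"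
    "Suc (4 * j) mod 4 = 1" "Suc (Suc (4 * j)) mod 4 = 2" "Suc (Suc (Suc (4 * j))) mod 4 = 3"
    by presburger+
  then show
    "edge_tail 0 = src_vertex 0" "edge_head 0 = snk_vertex 0"
    "edge_slope 0 = 1" "edge_offset 0 = 0"
    "edge_tail (src_link j) = src_vertex (Suc j)" "edge_head (src_link j) = src_vertex j"
    "edge_slope (src_link j) = 2" "edge_offset (src_link j) = 0"
    "edge_tail (src_bypass j) = src_vertex j" "edge_head (src_bypass j) = snk_vertex (Suc j)"
    "edge_slope (src_bypass j) = 1" "edge_offset (src_bypass j) = 16 ^ Suc j"
    "edge_tail (snk_bypass j) = src_vertex (Suc j)" "edge_head (snk_bypass j) = snk_vertex j"
    "edge_slope (snk_bypass j) = 1" "edge_offset (snk_bypass j) = 16 ^ Suc j"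
    "edge_tail (snk_link j) = snk_vertex j" "edge_head (snk_link j) = snk_vertex (Suc j)"
    "edge_slope (snk_link j) = 2" "edge_offset (snk_link j) = 0"
    by (simp_all add: edge_tail_def edge_head_def edge_slope_def edge_offset_def
        src_link_def src_bypass_def snk_bypass_def snk_link_def)
qed

lemma gadget_edges_distinct [simp]:
  "src_link j \<noteq> src_bypass j" "src_link j \<noteq> snk_bypass j" "src_link j \<noteq> snk_link j"
  "src_bypass j \<noteq> snk_bypass j" "src_bypass j \<noteq> snk_link j" "snk_bypass j \<noteq> snk_link j"
  "src_bypass j \<noteq> src_link j" "snk_bypass j \<noteq> src_link j" "snk_link j \<noteq> src_link j"
  "snk_bypass j \<noteq> src_bypass j" "snk_link j \<noteq> src_bypass j" "snk_link j \<noteq> snk_bypass j"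
  by (simp_all add: src_link_def src_bypass_def snk_bypass_def snk_link_def)

lemma gadget_vertices_distinct [simp]:
  "src_vertex i = src_vertex j \<longleftrightarrow> i = j" "snk_vertex i = snk_vertex j \<longleftrightarrow> i = j"
  "src_vertex i \<noteq> snk_vertex j" "snk_vertex i \<noteq> src_vertex j"
  by (simp_all add: src_vertex_def snk_vertex_def) presburger+

lemma gadget_edges_not_in_level_edges [simp]:
  "src_link j \<notin> level_edges j" "src_bypass j \<notin> level_edges j"
  "snk_bypass j \<notin> level_edges j" "snk_link j \<notin> level_edges j"
  by (simp_all add: level_edges_def src_link_def src_bypass_def snk_bypass_def snk_link_def)

lemma level_edges_0: "level_edges 0 = {0}"
  by (auto simp: level_edges_def)

lemma level_edges_Suc:
  "level_edges (Suc j) = level_edges j \<union> {src_link j, src_bypass j, snk_bypass j, snk_link j}"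
  by (auto simp: level_edges_def src_link_def src_bypass_def snk_bypass_def snk_link_def)

lemma terminals_in_level_verts [simp]:
  "src_vertex j \<in> level_verts k \<longleftrightarrow> j \<le> k" "snk_vertex j \<in> level_verts k \<longleftrightarrow> j \<le> k"
  by (auto simp: level_verts_def src_vertex_def snk_vertex_def)

lemma level_verts_Suc: "level_verts (Suc j) = level_verts j \<union> {src_vertex (Suc j), snk_vertex (Suc j)}"
  by (auto simp: level_verts_def src_vertex_def snk_vertex_def)

lemma edge_ends_in_level_verts:
  assumes "e \<in> level_edges k"
  shows "edge_tail e \<in> level_verts k" "edge_head e \<in> level_verts k" "edge_head e \<noteq> src_vertex k"
proof -
  have "edge_tail e \<in> level_verts k \<and> edge_head e \<in> level_verts k \<and> edge_head e \<noteq> src_vertex k"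
    using assms
  proof (induction k)
    case 0
    then show ?case by (simp add: level_edges_0)
  next
    case (Suc j)
    have "src_vertex (Suc j) \<notin> level_verts j" by simp
    then show ?case using Suc by (auto simp: level_edges_Suc level_verts_Suc)
  qed
  then show "edge_tail e \<in> level_verts k" "edge_head e \<in> level_verts k" "edge_head e \<noteq> src_vertex k"
    by simp_all
qed

lemma edge_slope_pos: "0 < edge_slope e" and edge_offset_nonneg: "0 \<le> edge_offset e"
proof -
  have "(e - 1) mod 4 < 4" by simp
  then have "(e - 1) mod 4 \<in> {0, 1, 2, 3}" by auto
  then show "0 < edge_slope e" "0 \<le> edge_offset e"
    by (auto simp: edge_slope_def edge_offset_def Let_def)
qed

fun level_cost :: "nat \<Rightarrow> real \<Rightarrow> real" where
  "level_cost 0 = (\<lambda>d. d)"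
| "level_cost (Suc j) = gadget_cost (level_cost j) (16 ^ Suc j)"

lemma level_cost_zero_mono_lipschitz:
  "level_cost j 0 = 0 \<and> mono_on {0..} (level_cost j) \<and> (\<exists>L. L-lipschitz_on {0..} (level_cost j))"
proof (induction j)
  case 0
  have "1-lipschitz_on {0..} (\<lambda>d::real. d)" by (rule lipschitz_onI) auto
  then show ?case by (auto intro: mono_onI)
next
  case (Suc j)
  then obtain L where L: "L-lipschitz_on {0..} (level_cost j)" by blast
  interpret gadget "level_cost j" "16 ^ Suc j"
    using Suc lipschitz_on_continuous_on[OF L] by unfold_locales auto
  show ?case using gadget_cost_zero mono_on_gadget_cost[OF L] lipschitz_on_gadget_cost[OF L] by auto
qed

lemma level_gadget: "gadget (level_cost j) (16 ^ Suc j)"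
proof -
  obtain L where "L-lipschitz_on {0..} (level_cost j)" using level_cost_zero_mono_lipschitz by blast
  then show ?thesis
    using level_cost_zero_mono_lipschitz lipschitz_on_continuous_on by unfold_locales auto
qed

lemma level_cost_curve: "cost_curve (level_cost j)"
  using level_gadget by (rule gadget.axioms(1))

definition level_inner :: "nat \<Rightarrow> real \<Rightarrow> real" where
  "level_inner j = inner_demand (level_cost j) (16 ^ Suc j)"

lemma level_inner_bounds: "0 \<le> D \<Longrightarrow> 0 \<le> level_inner j D \<and> level_inner j D \<le> D"
  unfolding level_inner_def by (rule gadget.inner_demand_bounds[OF level_gadget])

lemma level_inner_0 [simp]: "level_inner j 0 = 0"
  using level_inner_bounds[of 0 j] by linarith

fun level_flow :: "nat \<Rightarrow> real \<Rightarrow> nat \<Rightarrow> real" where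
  "level_flow 0 d e = (if e = 0 then d else 0)"
| "level_flow (Suc j) D e = (let t = level_inner j D in
     if e = src_link j \<or> e = snk_link j then (D + t) / 2
     else if e = src_bypass j \<or> e = snk_bypass j then (D - t) / 2
     else level_flow j t e)"

definition src_bypass_path :: "nat \<Rightarrow> nat list" where
  "src_bypass_path j = [src_link j, src_bypass j]"

definition snk_bypass_path :: "nat \<Rightarrow> nat list" where
  "snk_bypass_path j = [snk_bypass j, snk_link j]"

definition wrap_path :: "nat \<Rightarrow> nat list \<Rightarrow> nat list" where
  "wrap_path j q = src_link j # q @ [snk_link j]"

fun level_paths :: "nat \<Rightarrow> nat list set" where
  "level_paths 0 = {[0]}"
| "level_paths (Suc j) = insert (src_bypass_path j) (insert (snk_bypass_path j) (wrap_path j ` level_paths j))"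

fun level_path_flow :: "nat \<Rightarrow> real \<Rightarrow> nat list \<Rightarrow> real" where
  "level_path_flow 0 d p = (if p = [0] then d else 0)"
| "level_path_flow (Suc j) D p = (let t = level_inner j D in
     if p = src_bypass_path j \<or> p = snk_bypass_path j then (D - t) / 2
     else if p \<noteq> [] \<and> hd p = src_link j \<and> last p = snk_link j
     then level_path_flow j t (butlast (tl p)) else 0)"

declare level_flow.simps(2) [simp del] level_path_flow.simps(2) [simp del]

lemma level_flow_0_demand [simp]: "level_flow k 0 e = 0"
  by (induction k arbitrary: e) (auto simp: level_flow.simps(2))

lemma level_flow_outside: "e \<notin> level_edges k \<Longrightarrow> level_flow k d e = 0"
  by (induction k arbitrary: d) (auto simp: level_flow.simps(2) level_edges_0 level_edges_Suc Let_def)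

lemma level_flow_Suc_inner: "e \<in> level_edges j \<Longrightarrow> level_flow (Suc j) D e = level_flow j (level_inner j D) e"
  using gadget_edges_not_in_level_edges[of j] by (auto simp: level_flow.simps(2) Let_def)

lemma level_flow_Suc_gadget:
  "level_flow (Suc j) D (src_link j) = (D + level_inner j D) / 2"
  "level_flow (Suc j) D (snk_link j) = (D + level_inner j D) / 2"
  "level_flow (Suc j) D (src_bypass j) = (D - level_inner j D) / 2"
  "level_flow (Suc j) D (snk_bypass j) = (D - level_inner j D) / 2"
  by (simp_all add: level_flow.simps(2))

lemma bypass_paths_distinct [simp]: "src_bypass_path j \<noteq> snk_bypass_path j"
  unfolding src_bypass_path_def snk_bypass_path_def by simp

lemma wrap_path_props [simp]:
  "wrap_path j q \<noteq> src_bypass_path j" "wrap_path j q \<noteq> snk_bypass_path j"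
  "hd (wrap_path j q) = src_link j" "last (wrap_path j q) = snk_link j"
  "butlast (tl (wrap_path j q)) = q" "wrap_path j q \<noteq> []"
  by (simp_all add: wrap_path_def src_bypass_path_def snk_bypass_path_def)

lemma inj_wrap_path: "inj (wrap_path j)"
  by (rule injI) (simp add: wrap_path_def)

lemma finite_level_paths: "finite (level_paths k)"
  by (induction k) simp_all

lemma level_paths_subset: "p \<in> level_paths k \<Longrightarrow> set p \<subseteq> level_edges k"
  by (induction k arbitrary: p)
    (fastforce simp: level_edges_0 level_edges_Suc src_bypass_path_def snk_bypass_path_def
      wrap_path_def)+

lemma sum_level_paths_Suc:
  "(\<Sum>p\<in>level_paths (Suc j). g p) =
     g (src_bypass_path j) + g (snk_bypass_path j) + (\<Sum>q\<in>level_paths j. g (wrap_path j q))"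
proof -
  have "src_bypass_path j \<notin> insert (snk_bypass_path j) (wrap_path j ` level_paths j)"
    "snk_bypass_path j \<notin> wrap_path j ` level_paths j"
    using wrap_path_props(1,2) bypass_paths_distinct by (metis image_iff insert_iff)+
  then show ?thesis
    using finite_level_paths[of j]
    by (simp add: sum.reindex[OF inj_on_subset[OF inj_wrap_path subset_UNIV]] add.assoc)
qed

lemma level_path_flow_Suc:
  "level_path_flow (Suc j) D (src_bypass_path j) = (D - level_inner j D) / 2"
  "level_path_flow (Suc j) D (snk_bypass_path j) = (D - level_inner j D) / 2"
  "level_path_flow (Suc j) D (wrap_path j q) = level_path_flow j (level_inner j D) q"
  by (simp_all add: level_path_flow.simps(2))

lemma level_path_flow_nonneg: "0 \<le> d \<Longrightarrow> 0 \<le> level_path_flow k d p"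
  by (induction k arbitrary: d p) (auto simp: level_path_flow.simps(2) Let_def level_inner_bounds)

lemma level_path_flow_support: "level_path_flow k d p \<noteq> 0 \<Longrightarrow> p \<in> level_paths k"
proof (induction k arbitrary: d p)
  case 0
  then show ?case by (simp split: if_splits)
next
  case (Suc j)
  show ?case
  proof (cases "p = src_bypass_path j \<or> p = snk_bypass_path j")
    case False
    then have "p \<noteq> [] \<and> hd p = src_link j \<and> last p = snk_link j"
      and inner: "level_path_flow j (level_inner j d) (butlast (tl p)) \<noteq> 0"
      using Suc.prems by (auto simp: level_path_flow.simps(2) Let_def split: if_splits)
    then have "p = wrap_path j (butlast (tl p))"
      using list_eq_hd_butlast_tl_last[of p] by (simp add: wrap_path_def)
    then show ?thesis using Suc.IH[OF inner] by (metis image_eqI insertI2 level_paths.simps(2))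
  qed auto
qed

lemma sum_level_path_flow: "(\<Sum>p\<in>level_paths k. level_path_flow k d p) = d"
  by (induction k arbitrary: d) (simp_all only: sum_level_paths_Suc level_path_flow_Suc, simp_all)

lemma level_flow_eq_sum_paths:
  "level_flow k d e = (\<Sum>p\<in>level_paths k. if e \<in> set p then level_path_flow k d p else 0)"
proof (induction k arbitrary: d)
  case 0
  then show ?case by simp
next
  case (Suc j)
  let ?t = "level_inner j d"
  have wrap: "e \<in> set (wrap_path j q) \<longleftrightarrow> e = src_link j \<or> e = snk_link j \<or> e \<in> set q" for q
    by (auto simp: wrap_path_def)
  have "(\<Sum>p\<in>level_paths (Suc j). if e \<in> set p then level_path_flow (Suc j) d p else 0) =
      (if e \<in> set (src_bypass_path j) then (d - ?t) / 2 else 0)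
      + (if e \<in> set (snk_bypass_path j) then (d - ?t) / 2 else 0)
      + (\<Sum>q\<in>level_paths j. if e \<in> set (wrap_path j q) then level_path_flow j ?t q else 0)"
    by (simp only: sum_level_paths_Suc level_path_flow_Suc)
  also have "\<dots> = level_flow (Suc j) d e"
  proof (cases "e \<in> level_edges j")
    case True
    then show ?thesis
      using gadget_edges_not_in_level_edges[of j] Suc.IH
      by (auto simp: wrap level_flow_Suc_inner src_bypass_path_def snk_bypass_path_def)
  next
    case False
    have "(\<Sum>q\<in>level_paths j. if e \<in> set q then level_path_flow j ?t q else 0) = 0"
      using False level_paths_subset by (intro sum.neutral) auto
    then show ?thesis
      using False sum_level_path_flow[of j ?t] level_flow_outside[OF False]
      by (auto simp: wrap level_flow.simps(2) Let_def src_bypass_path_def snk_bypass_path_def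
          field_simps)
  qed
  finally show ?case ..
qed

definition level_path :: "nat \<Rightarrow> nat list \<Rightarrow> bool" where
  "level_path k p \<longleftrightarrow> p \<noteq> [] \<and> set p \<subseteq> level_edges k \<and>
     edge_tail (hd p) = src_vertex k \<and> edge_head (last p) = snk_vertex k \<and>
     successively (\<lambda>a b. edge_head a = edge_tail b) p \<and>
     distinct (edge_tail (hd p) # map edge_head p)"

lemma level_path_wrap_path:
  assumes "level_path j q"
  shows "level_path (Suc j) (wrap_path j q)"
proof -
  have q: "q \<noteq> []" "set q \<subseteq> level_edges j" "edge_tail (hd q) = src_vertex j"
    "edge_head (last q) = snk_vertex j" "successively (\<lambda>a b. edge_head a = edge_tail b) q"
    "distinct (src_vertex j # map edge_head q)"
    using assms by (auto simp: level_path_def)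
  have "edge_head e \<in> level_verts j" if "e \<in> set q" for e
    using edge_ends_in_level_verts that q(2) by blast
  then have "src_vertex (Suc j) \<notin> edge_head ` set q" "snk_vertex (Suc j) \<notin> edge_head ` set q"
    by (metis Suc_n_not_le_n image_iff terminals_in_level_verts)+
  moreover have "successively (\<lambda>a b. edge_head a = edge_tail b) (wrap_path j q)"
    unfolding wrap_path_def using q by (simp add: successively_append_iff successively_Cons hd_append)
  ultimately show ?thesis
    using q by (auto simp: level_path_def wrap_path_def level_edges_Suc)
qed

lemma level_path_level_paths: "p \<in> level_paths k \<Longrightarrow> level_path k p"
proof (induction k arbitrary: p)
  case 0
  then show ?case by (simp add: level_path_def level_edges_0)
next
  case (Suc j)
  have "level_path (Suc j) (src_bypass_path j)" "level_path (Suc j) (snk_bypass_path j)"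
    by (auto simp: level_path_def level_edges_Suc src_bypass_path_def snk_bypass_path_def)
  then show ?case using Suc level_path_wrap_path by auto
qed

text \<open>Node potentials certifying the equilibrium of level \<open>k\<close> with demand \<open>d\<close>: the equilibrium
  distances from the source. When the gadget is congested (\<open>2b \<le> D\<close>, no inner flow) all inner
  vertices except \<open>s\<close> receive the distance of \<open>t\<close>.\<close>

fun level_potential :: "nat \<Rightarrow> real \<Rightarrow> nat \<Rightarrow> real" where
  "level_potential 0 d v = (if v = snk_vertex 0 then d else 0)"
| "level_potential (Suc j) D v = (let t = level_inner j D; b = 16 ^ Suc j;
     \<pi>t = (if D < 2 * b then D + t + level_cost j t else D / 2 + b) in
     if v = src_vertex (Suc j) then 0 else if v = snk_vertex (Suc j) then level_cost (Suc j) D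
     else if v = src_vertex j then D + t else if v = snk_vertex j then \<pi>t
     else if D < 2 * b then D + t + level_potential j t v else \<pi>t)"

declare level_potential.simps(2) [simp del]

definition tight_potential :: "(nat \<Rightarrow> real) \<Rightarrow> (nat \<Rightarrow> real) \<Rightarrow> nat set \<Rightarrow> bool" where
  "tight_potential \<pi> x E \<longleftrightarrow> (\<forall>e\<in>E.
     \<pi> (edge_head e) \<le> \<pi> (edge_tail e) + edge_slope e * x e + edge_offset e \<and>
     (0 < x e \<longrightarrow> \<pi> (edge_head e) = \<pi> (edge_tail e) + edge_slope e * x e + edge_offset e))"

lemma tight_potential_Un:
  "tight_potential \<pi> x (E \<union> F) \<longleftrightarrow> tight_potential \<pi> x E \<and> tight_potential \<pi> x F"
  unfolding tight_potential_def by blast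

lemma tight_potential_cong:
  assumes "\<forall>e\<in>E. \<pi>' (edge_head e) = \<pi> (edge_head e) \<and> \<pi>' (edge_tail e) = \<pi> (edge_tail e)"
    and "\<forall>e\<in>E. x' e = x e"
  shows "tight_potential \<pi>' x' E \<longleftrightarrow> tight_potential \<pi> x E"
  using assms unfolding tight_potential_def by simp

lemma tight_potential_shift: "tight_potential (\<lambda>v. a + \<pi> v) x E \<longleftrightarrow> tight_potential \<pi> x E"
  unfolding tight_potential_def by (simp add: add.assoc)

lemma level_potential_terminals [simp]:
  "level_potential k d (src_vertex k) = 0" "level_potential k d (snk_vertex k) = level_cost k d"
  by (cases k; simp add: level_potential.simps(2))+

lemma level_potential_Suc_uncongested:
  assumes "D < 2 * 16 ^ Suc j" "v \<in> level_verts j"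
  shows "level_potential (Suc j) D v = D + level_inner j D + level_potential j (level_inner j D) v"
proof -
  have "v \<noteq> src_vertex (Suc j)" "v \<noteq> snk_vertex (Suc j)" using assms(2) by auto
  then show ?thesis using assms(1) by (auto simp: level_potential.simps(2) Let_def)
qed

lemma level_potential_Suc_congested:
  assumes "2 * 16 ^ Suc j \<le> D" "v \<in> level_verts j"
  shows "level_potential (Suc j) D (src_vertex j) = D"
    and "v \<noteq> src_vertex j \<Longrightarrow> level_potential (Suc j) D v = D / 2 + 16 ^ Suc j"
proof -
  have "level_inner j D = 0"
    using gadget.inner_demand_eq_0[OF level_gadget] assms(1) by (simp add: level_inner_def)
  moreover have "v \<noteq> src_vertex (Suc j)" "v \<noteq> snk_vertex (Suc j)" using assms(2) by auto
  ultimately show "level_potential (Suc j) D (src_vertex j) = D"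
    "v \<noteq> src_vertex j \<Longrightarrow> level_potential (Suc j) D v = D / 2 + 16 ^ Suc j"
    using assms(1) by (auto simp: level_potential.simps(2) Let_def)
qed

lemma tight_potential_gadget_edges:
  assumes "0 \<le> D"
  shows "tight_potential (level_potential (Suc j) D) (level_flow (Suc j) D)
    {src_link j, src_bypass j, snk_bypass j, snk_link j}"
proof -
  interpret gadget "level_cost j" "16 ^ Suc j" by (rule level_gadget)
  define t where "t = level_inner j D"
  define \<pi>t where "\<pi>t = (if D < 2 * 16 ^ Suc j then D + t + level_cost j t else D / 2 + 16 ^ Suc j)"
  have potential:
    "level_potential (Suc j) D (src_vertex (Suc j)) = 0"
    "level_potential (Suc j) D (snk_vertex (Suc j)) = \<pi>t + D + t"
    "level_potential (Suc j) D (src_vertex j) = D + t"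
    "level_potential (Suc j) D (snk_vertex j) = \<pi>t"
    using gadget_cost_eq_potential(1)[OF assms _ \<pi>t_def[unfolded t_def level_inner_def]]
    by (simp_all add: level_potential.simps(2) Let_def t_def \<pi>t_def level_inner_def)
  have "\<pi>t \<le> (D - t) / 2 + 16 ^ Suc j" "0 < (D - t) / 2 \<Longrightarrow> \<pi>t = (D - t) / 2 + 16 ^ Suc j"
    using gadget_cost_eq_potential(2,3)[OF assms _ \<pi>t_def[unfolded t_def level_inner_def]]
    by (simp_all add: t_def level_inner_def)
  then show ?thesis
    using potential by (auto simp: tight_potential_def level_flow_Suc_gadget t_def[symmetric])
qed

lemma tight_potential_inner_edges:
  assumes "0 \<le> D"
    and inner: "tight_potential (level_potential j (level_inner j D)) (level_flow j (level_inner j D))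
      (level_edges j)"
  shows "tight_potential (level_potential (Suc j) D) (level_flow (Suc j) D) (level_edges j)"
proof (cases "D < 2 * 16 ^ Suc j")
  case True
  let ?t = "level_inner j D"
  have "tight_potential (level_potential (Suc j) D) (level_flow (Suc j) D) (level_edges j) \<longleftrightarrow>
      tight_potential (\<lambda>v. D + ?t + level_potential j ?t v) (level_flow j ?t) (level_edges j)"
    using True edge_ends_in_level_verts
    by (intro tight_potential_cong) (simp_all add: level_potential_Suc_uncongested level_flow_Suc_inner)
  then show ?thesis using inner tight_potential_shift by blast
next
  case False
  have no_flow: "level_flow (Suc j) D e = 0" if "e \<in> level_edges j" for e
    using gadget.inner_demand_eq_0[OF level_gadget] False that
    by (simp add: level_flow_Suc_inner level_inner_def)
  have lower: "D / 2 + 16 ^ Suc j \<le> level_potential (Suc j) D v" if "v \<in> level_verts j" for v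
    using level_potential_Suc_congested[of j D v] False that by (cases "v = src_vertex j") auto
  show ?thesis
    unfolding tight_potential_def
  proof
    fix e assume e: "e \<in> level_edges j"
    have "level_potential (Suc j) D (edge_head e) = D / 2 + 16 ^ Suc j"
      using level_potential_Suc_congested(2) False edge_ends_in_level_verts[OF e] by simp
    then show "level_potential (Suc j) D (edge_head e) \<le> level_potential (Suc j) D (edge_tail e)
        + edge_slope e * level_flow (Suc j) D e + edge_offset e \<and>
      (0 < level_flow (Suc j) D e \<longrightarrow> level_potential (Suc j) D (edge_head e) =
        level_potential (Suc j) D (edge_tail e) + edge_slope e * level_flow (Suc j) D e + edge_offset e)"
      using lower[OF edge_ends_in_level_verts(1)[OF e]] no_flow[OF e] edge_offset_nonneg[of e] by simp
  qed
qed

lemma tight_potential_level: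
  "0 \<le> d \<Longrightarrow> tight_potential (level_potential k d) (level_flow k d) (level_edges k)"
proof (induction k arbitrary: d)
  case 0
  then show ?case by (simp add: tight_potential_def level_edges_0)
next
  case (Suc j)
  then have "0 \<le> level_inner j d" using level_inner_bounds by blast
  then have "tight_potential (level_potential (Suc j) d) (level_flow (Suc j) d)
      (level_edges j \<union> {src_link j, src_bypass j, snk_bypass j, snk_link j})"
    unfolding tight_potential_Un
    using Suc tight_potential_gadget_edges tight_potential_inner_edges by blast
  then show ?case by (simp only: level_edges_Suc)
qed

lemma level_inner_eq_flow_diff:
  "level_inner j D = level_flow (Suc j) D (src_link j) - level_flow (Suc j) D (src_bypass j)"
  by (simp add: level_flow_Suc_gadget field_simps)

lemma not_affine_near_level_Suc:
  assumes not_affine: "\<not> affine_near (level_edges j) (level_flow j) (level_inner j D)"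
    and "0 < \<eta>" and inj: "inj_on (level_inner j) {l. \<bar>l - D\<bar> < \<eta>}"
  shows "\<not> affine_near (level_edges (Suc j)) (level_flow (Suc j)) D"
proof
  assume "affine_near (level_edges (Suc j)) (level_flow (Suc j)) D"
  then have "affine_near (level_edges j) (level_flow j) (level_inner j D)"
  proof (rule affine_near_reparam[where F = "{src_link j, src_bypass j}"
        and w = "\<lambda>e. if e = src_link j then 1 else -1"])
    show "level_edges j \<subseteq> level_edges (Suc j)" "{src_link j, src_bypass j} \<subseteq> level_edges (Suc j)"
      by (auto simp: level_edges_Suc)
    show "\<forall>l. \<bar>l - D\<bar> < \<eta> \<longrightarrow> (\<forall>e\<in>level_edges j. level_flow (Suc j) l e = level_flow j (level_inner j l) e)"
      by (simp add: level_flow_Suc_inner)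
    show "\<forall>l. \<bar>l - D\<bar> < \<eta> \<longrightarrow> level_inner j l = (\<Sum>e\<in>{src_link j, src_bypass j}.
        (if e = src_link j then 1 else -1) * level_flow (Suc j) l e)"
      using level_inner_eq_flow_diff by simp
  qed fact+
  then show False using not_affine by simp
qed

lemma not_affine_near_level_saturation:
  "\<not> affine_near (level_edges (Suc j)) (level_flow (Suc j)) (saturation_demand (level_cost j) (16 ^ Suc j))"
proof
  let ?s = "saturation_demand (level_cost j) (16 ^ Suc j)"
  assume "affine_near (level_edges (Suc j)) (level_flow (Suc j)) ?s"
  then obtain \<epsilon> p q where "0 < \<epsilon>"
    and affine: "\<forall>l. \<bar>l - ?s\<bar> < \<epsilon> \<longrightarrow> (\<forall>e\<in>level_edges (Suc j). level_flow (Suc j) l e = p e + q e * l)"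
    unfolding affine_near_def by blast
  have "level_inner j l = (p (src_link j) - p (src_bypass j)) + (q (src_link j) - q (src_bypass j)) * l"
    if "\<bar>l - ?s\<bar> < \<epsilon>" for l
    using affine that level_inner_eq_flow_diff[of j l]
    by (simp add: level_edges_Suc algebra_simps)
  then have "\<exists>\<epsilon>>0. \<exists>\<alpha> \<beta>. \<forall>l. \<bar>l - ?s\<bar> < \<epsilon> \<longrightarrow> inner_demand (level_cost j) (16 ^ Suc j) l = \<alpha> + \<beta> * l"
    using \<open>0 < \<epsilon>\<close> unfolding level_inner_def by blast
  then show False
    using gadget.inner_demand_not_affine_near_saturation[OF level_gadget] by blast
qed

lemma not_affine_near_level_below_saturation:
  assumes "0 < d" "d < saturation_demand (level_cost j) (16 ^ Suc j)"
    and "\<not> affine_near (level_edges j) (level_flow j) d"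
  shows "\<not> affine_near (level_edges (Suc j)) (level_flow (Suc j)) d"
proof -
  interpret gadget "level_cost j" "16 ^ Suc j" by (rule level_gadget)
  define \<eta> where "\<eta> = min d (saturation_demand (level_cost j) (16 ^ Suc j) - d)"
  have identity: "level_inner j l = l" if "\<bar>l - d\<bar> < \<eta>" for l
    using inner_demand_saturated that by (simp add: level_inner_def \<eta>_def abs_less_iff)
  then have "inj_on (level_inner j) {l. \<bar>l - d\<bar> < \<eta>}"
    by (auto intro: inj_onI)
  moreover have "0 < \<eta>" using assms by (simp add: \<eta>_def)
  ultimately show ?thesis
    using not_affine_near_level_Suc identity[of d] assms(3) by simp
qed

lemma not_affine_near_level_outer_demand:
  assumes "0 < d" "d < saturation_demand (level_cost j) (16 ^ Suc j)"
    and "\<not> affine_near (level_edges j) (level_flow j) d"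
  shows "\<not> affine_near (level_edges (Suc j)) (level_flow (Suc j)) (outer_demand (level_cost j) (16 ^ Suc j) d)"
proof -
  interpret gadget "level_cost j" "16 ^ Suc j" by (rule level_gadget)
  let ?s = "saturation_demand (level_cost j) (16 ^ Suc j)"
    and ?D = "outer_demand (level_cost j) (16 ^ Suc j) d"
  define \<eta> where "\<eta> = min (?D - ?s) (2 * 16 ^ Suc j - ?D)"
  have "0 < \<eta>" using outer_demand[OF assms(1,2)] by (simp add: \<eta>_def)
  moreover have "inj_on (level_inner j) {l. \<bar>l - ?D\<bar> < \<eta>}"
  proof (rule inj_onI)
    fix x y assume "x \<in> {l. \<bar>l - ?D\<bar> < \<eta>}" "y \<in> {l. \<bar>l - ?D\<bar> < \<eta>}" "level_inner j x = level_inner j y"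
    then have "?s \<le> x" "x \<le> 2 * 16 ^ Suc j" "?s \<le> y" "y \<le> 2 * 16 ^ Suc j"
      and "inner_demand (level_cost j) (16 ^ Suc j) x = inner_demand (level_cost j) (16 ^ Suc j) y"
      by (auto simp: level_inner_def \<eta>_def abs_less_iff)
    then show "x = y"
      using inner_demand_strict_antimono[of x y] inner_demand_strict_antimono[of y x]
      by (metis linorder_neqE_linordered_idom order_less_irrefl)
  qed
  ultimately show ?thesis
    using not_affine_near_level_Suc outer_demand(3)[OF assms(1,2)] assms(3)
    by (simp add: level_inner_def)
qed

text \<open>The offsets \<open>16\<^sup>j\<^sup>+\<^sup>1\<close> grow fast enough that
  the breakpoints of level \<open>j\<close>, which satisfy \<open>2d + C\<^sub>j d \<le> 9 \<cdot> 16\<^sup>j\<close>, lie below the saturation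
  demand of the next gadget, where its inner flow is the identity.\<close>

definition bounded_breakpoint :: "nat \<Rightarrow> real \<Rightarrow> bool" where
  "bounded_breakpoint k d \<longleftrightarrow> 0 < d \<and> 2 * d + level_cost k d \<le> 9 * 16 ^ k \<and>
     \<not> affine_near (level_edges k) (level_flow k) d"

lemma bounded_breakpoint_less_saturation:
  assumes "bounded_breakpoint j d"
  shows "d < saturation_demand (level_cost j) (16 ^ Suc j)"
proof -
  interpret gadget "level_cost j" "16 ^ Suc j" by (rule level_gadget)
  have "(9::real) * 16 ^ j < 16 ^ Suc j" by simp
  then have "2 * d + level_cost j d < 16 ^ Suc j"
    using assms unfolding bounded_breakpoint_def by linarith
  then show ?thesis
    using assms saturated_iff[of d] saturation_demand(2)
    by (cases "d = saturation_demand (level_cost j) (16 ^ Suc j)") (auto simp: bounded_breakpoint_def)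
qed

lemma bounded_breakpoint_SucI:
  assumes "0 < D" "D \<le> 2 * 16 ^ Suc j"
    and "\<not> affine_near (level_edges (Suc j)) (level_flow (Suc j)) D"
  shows "bounded_breakpoint (Suc j) D"
  using gadget.gadget_cost_le[OF level_gadget[of j], of D] assms
  unfolding bounded_breakpoint_def level_cost.simps by simp

lemma level_breakpoints: "\<exists>B. finite B \<and> 2 ^ k - 1 \<le> card B \<and> (\<forall>d\<in>B. bounded_breakpoint k d)"
proof (induction k)
  case 0
  show ?case by (intro exI[of _ "{}"]) simp
next
  case (Suc j)
  then obtain B where "finite B" and card_B: "2 ^ j - 1 \<le> card B"
    and B: "\<And>d. d \<in> B \<Longrightarrow> bounded_breakpoint j d"
    by blast
  interpret gadget "level_cost j" "16 ^ Suc j" by (rule level_gadget)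
  let ?s = "saturation_demand (level_cost j) (16 ^ Suc j)"
    and ?D = "outer_demand (level_cost j) (16 ^ Suc j)"
  have below: "0 < d \<and> d < ?s" if "d \<in> B" for d
    using B[OF that] bounded_breakpoint_less_saturation by (auto simp: bounded_breakpoint_def)
  have outer: "?s < ?D d \<and> ?D d < 2 * 16 ^ Suc j" if "d \<in> B" for d
    using outer_demand(1,2) below[OF that] by blast
  have "inj_on ?D B"
    by (rule inj_on_subset[OF inj_on_outer_demand]) (use below in force)
  moreover have "B \<inter> ?D ` B = {}" using below outer by fastforce
  moreover have "?s \<notin> B" "?s \<notin> ?D ` B"
    using below outer by (meson less_irrefl, metis image_iff less_irrefl)
  ultimately have "card (B \<union> ?D ` B \<union> {?s}) = 2 * card B + 1"
    using \<open>finite B\<close> by (simp add: card_Un_disjoint card_image)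
  then have card: "2 ^ Suc j - 1 \<le> card (B \<union> ?D ` B \<union> {?s})"
    using card_B by simp
  have "bounded_breakpoint (Suc j) d" "bounded_breakpoint (Suc j) (?D d)" if "d \<in> B" for d
  proof -
    have "\<not> affine_near (level_edges j) (level_flow j) d"
      using B[OF that] by (simp add: bounded_breakpoint_def)
    then show "bounded_breakpoint (Suc j) d" "bounded_breakpoint (Suc j) (?D d)"
      using below[OF that] outer[OF that] saturation_demand_less
        not_affine_near_level_below_saturation not_affine_near_level_outer_demand
      by (auto intro!: bounded_breakpoint_SucI)
  qed
  moreover have "bounded_breakpoint (Suc j) ?s"
    using not_affine_near_level_saturation saturation_demand_pos saturation_demand_less
    by (intro bounded_breakpoint_SucI) simp_all
  ultimately show ?case
    using \<open>finite B\<close> card by (intro exI[of _ "B \<union> ?D ` B \<union> {?s}"]) auto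
qed

section \<open>The priced network\<close>

text \<open>Split of the total demand \<open>D\<^sub>t\<close> between a priced route (cost \<open>\<lambda> + x + c x\<close>) and a parallel
  direct edge (cost \<open>x\<close>): the priced route carries the \<open>d\<close> with \<open>\<lambda> + d + c d = D\<^sub>t - d\<close>, that is,
  the saturation demand of \<open>c\<close> at level \<open>D\<^sub>t - \<lambda>\<close>, and nothing once \<open>D\<^sub>t \<le> \<lambda>\<close>.\<close>

definition priced_demand :: "(real \<Rightarrow> real) \<Rightarrow> real \<Rightarrow> real \<Rightarrow> real" where
  "priced_demand c Dt l = (if l < Dt then saturation_demand c (Dt - l) else 0)"

context cost_curve
begin

lemma priced_demand:
  assumes "l < Dt"
  shows "0 \<le> priced_demand c Dt l" "2 * priced_demand c Dt l + c (priced_demand c Dt l) = Dt - l"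
proof -
  interpret gadget c "Dt - l" using assms by unfold_locales simp
  show "0 \<le> priced_demand c Dt l" "2 * priced_demand c Dt l + c (priced_demand c Dt l) = Dt - l"
    using saturation_demand assms by (simp_all add: priced_demand_def)
qed

lemma priced_demand_eq_0: "Dt \<le> l \<Longrightarrow> priced_demand c Dt l = 0"
  by (simp add: priced_demand_def)

lemma priced_demand_bounds:
  assumes "0 \<le> l" "0 \<le> Dt"
  shows "0 \<le> priced_demand c Dt l \<and> priced_demand c Dt l \<le> Dt"
proof (cases "l < Dt")
  case True
  then show ?thesis using priced_demand[OF True] nonneg[of "priced_demand c Dt l"] assms(1) by simp
qed (use priced_demand_eq_0 assms in simp)

lemma priced_demand_inverse:
  assumes "0 < d" "2 * d + c d < Dt"
  shows "0 < Dt - 2 * d - c d" and "priced_demand c Dt (Dt - 2 * d - c d) = d"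
proof -
  show "0 < Dt - 2 * d - c d" using assms by simp
  have "Dt - 2 * d - c d < Dt" using assms nonneg[of d] by linarith
  then show "priced_demand c Dt (Dt - 2 * d - c d) = d"
    using the_inv_into_lin_comb_eq[of 2 1 d] less_imp_le[OF assms(1)] by (simp add: priced_demand_def saturation_demand_def)
qed

lemma inj_on_priced_demand: "inj_on (priced_demand c Dt) {..<Dt}"
proof (rule inj_onI)
  fix l l' assume l: "l \<in> {..<Dt}" and l': "l' \<in> {..<Dt}"
    and eq: "priced_demand c Dt l = priced_demand c Dt l'"
  have "Dt - l = 2 * priced_demand c Dt l + c (priced_demand c Dt l)"
    using priced_demand(2) l by simp
  also have "\<dots> = Dt - l'" unfolding eq using priced_demand(2) l' by simp
  finally show "l = l'" by simp
qed

lemma inj_on_priced_demand_inverse: "inj_on (\<lambda>d. Dt - 2 * d - c d) {0..}"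
proof (rule inj_onI)
  fix x y :: real assume "x \<in> {0..}" "y \<in> {0..}" "Dt - 2 * x - c x = Dt - 2 * y - c y"
  then show "x = y" using inj_onD[OF inj_on_lin_comb[of 2 1], of x y] by simp
qed

end

text \<open>The network of the theorem: a new source \<open>src_vertex (K + 1)\<close> feeds the network of level
  \<open>K\<close> through the price edge \<open>src_link K\<close> (cost \<open>x + \<lambda>\<close>) and is joined to its sink by the direct
  edge \<open>snk_bypass K\<close> (cost \<open>x\<close>). The total demand exceeds the bound \<open>9 \<cdot> 16\<^sup>K\<close> on
  \<open>2d + C\<^sub>K d\<close> at the breakpoints of level \<open>K\<close>, so each of them is attained at some \<open>\<lambda> > 0\<close>.\<close>

definition total_demand :: "nat \<Rightarrow> real" where "total_demand K = 9 * 16 ^ K + 1"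

definition price_network :: "nat \<Rightarrow> network" where
  "price_network K = \<lparr>verts = insert (src_vertex (Suc K)) (level_verts K),
     edges = level_edges K \<union> {src_link K, snk_bypass K},
     etail = edge_tail, ehead = edge_head,
     src = src_vertex (Suc K), snk = snk_vertex K, dem = total_demand K,
     ta = (\<lambda>e. if e \<in> level_edges K then edge_slope e else 1),
     tb = (\<lambda>e. if e \<in> level_edges K then edge_offset e else 0),
     gf = (\<lambda>e. if e = src_link K then 1 else 0)\<rparr>"

definition level_demand :: "nat \<Rightarrow> real \<Rightarrow> real" where
  "level_demand K l = priced_demand (level_cost K) (total_demand K) l"

definition price_flow :: "nat \<Rightarrow> real \<Rightarrow> nat \<Rightarrow> real" where
  "price_flow K l e = (if e = src_link K then level_demand K l
     else if e = snk_bypass K then total_demand K - level_demand K l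
     else level_flow K (level_demand K l) e)"

lemma total_demand_pos: "0 < total_demand K"
  by (simp add: total_demand_def add_pos_nonneg)

lemma level_demand_bounds: "0 \<le> l \<Longrightarrow> 0 \<le> level_demand K l \<and> level_demand K l \<le> total_demand K"
  using cost_curve.priced_demand_bounds[OF level_cost_curve] total_demand_pos
  by (simp add: level_demand_def less_imp_le)

lemma price_network_simps [simp]:
  "edges (price_network K) = level_edges K \<union> {src_link K, snk_bypass K}"
  "verts (price_network K) = insert (src_vertex (Suc K)) (level_verts K)"
  "etail (price_network K) = edge_tail" "ehead (price_network K) = edge_head"
  "src (price_network K) = src_vertex (Suc K)" "snk (price_network K) = snk_vertex K"
  "dem (price_network K) = total_demand K"
  by (simp_all add: price_network_def)

lemma edge_cost_price_network:
  "e \<in> level_edges K \<Longrightarrow> edge_cost (price_network K) l x e = edge_slope e * x e + edge_offset e"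
  "edge_cost (price_network K) l x (src_link K) = x (src_link K) + l"
  "edge_cost (price_network K) l x (snk_bypass K) = x (snk_bypass K)"
  by (auto simp: edge_cost_def price_network_def)

lemma price_flow_level_edges: "e \<in> level_edges K \<Longrightarrow> price_flow K l e = level_flow K (level_demand K l) e"
  by (auto simp: price_flow_def)

lemma valid_price_network: "valid_network (price_network K)"
proof -
  have "finite (level_verts K)" "finite (level_edges K)"
    by (simp_all add: level_verts_def level_edges_def)
  then show ?thesis
    unfolding valid_network_def
    using edge_ends_in_level_verts edge_slope_pos edge_offset_nonneg total_demand_pos
    by (auto simp: price_network_def less_imp_le)
qed

lemma ta_price_network_pos: "\<forall>e\<in>edges (price_network K). 0 < ta (price_network K) e"
  using edge_slope_pos by (simp add: price_network_def)

lemma card_verts_price_network: "card (verts (price_network K)) = 2 * K + 3"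
  by (simp add: level_verts_def src_vertex_def)

lemma card_edges_price_network: "card (edges (price_network K)) = 4 * K + 3"
  by (simp add: level_edges_def src_link_def snk_bypass_def)

definition price_paths :: "nat \<Rightarrow> nat list set" where
  "price_paths K = insert [snk_bypass K] ((#) (src_link K) ` level_paths K)"

definition price_path_flow :: "nat \<Rightarrow> real \<Rightarrow> nat list \<Rightarrow> real" where
  "price_path_flow K l p = (if p = [snk_bypass K] then total_demand K - level_demand K l
     else if p \<noteq> [] \<and> hd p = src_link K then level_path_flow K (level_demand K l) (tl p) else 0)"

lemma price_paths_st_paths: "price_paths K \<subseteq> st_paths (price_network K)"
proof
  fix p assume "p \<in> price_paths K"
  then consider "p = [snk_bypass K]" | q where "q \<in> level_paths K" "p = src_link K # q"
    by (auto simp: price_paths_def)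
  then show "p \<in> st_paths (price_network K)"
  proof cases
    case 1
    then show ?thesis by (simp add: st_paths_def is_st_path_def)
  next
    case 2
    then have q: "q \<noteq> []" "set q \<subseteq> level_edges K" "edge_tail (hd q) = src_vertex K"
      "edge_head (last q) = snk_vertex K" "successively (\<lambda>a b. edge_head a = edge_tail b) q"
      "distinct (src_vertex K # map edge_head q)"
      using level_path_level_paths[of q K] by (auto simp: level_path_def)
    have "edge_head e \<noteq> src_vertex (Suc K)" if "e \<in> set q" for e
      using edge_ends_in_level_verts(2)[of e K] that q(2) by auto
    then have "src_vertex (Suc K) \<notin> edge_head ` set q" by force
    moreover have "successively (\<lambda>a b. edge_head a = edge_tail b) p"
      using 2 q by (simp add: successively_Cons)
    ultimately show ?thesis
      using 2 q by (auto simp: st_paths_def is_st_path_def successively_conv_nth)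
  qed
qed

lemma sum_price_paths:
  "(\<Sum>p\<in>price_paths K. g p) = g [snk_bypass K] + (\<Sum>q\<in>level_paths K. g (src_link K # q))"
proof -
  have "[snk_bypass K] \<notin> (#) (src_link K) ` level_paths K" by auto
  moreover have "inj_on ((#) (src_link K)) (level_paths K)" by (rule inj_onI) simp
  ultimately show ?thesis by (simp add: price_paths_def finite_level_paths sum.reindex)
qed

lemma price_path_flow_simps [simp]:
  "price_path_flow K l [snk_bypass K] = total_demand K - level_demand K l"
  "price_path_flow K l (src_link K # q) = level_path_flow K (level_demand K l) q"
  by (simp_all add: price_path_flow_def)

lemma price_path_flow_nonneg: "0 \<le> l \<Longrightarrow> 0 \<le> price_path_flow K l p"
  using level_demand_bounds level_path_flow_nonneg by (simp add: price_path_flow_def)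

lemma price_path_flow_support: "p \<notin> price_paths K \<Longrightarrow> price_path_flow K l p = 0"
  using level_path_flow_support by (cases p) (auto simp: price_path_flow_def price_paths_def)

lemma sum_price_path_flow: "(\<Sum>p\<in>price_paths K. price_path_flow K l p) = total_demand K"
  by (simp add: sum_price_paths sum_level_path_flow)

lemma price_flow_eq_sum_paths:
  "price_flow K l e = (\<Sum>p\<in>price_paths K. if e \<in> set p then price_path_flow K l p else 0)"
proof -
  let ?d = "level_demand K l"
  have "(\<Sum>p\<in>price_paths K. if e \<in> set p then price_path_flow K l p else 0)
      = (if e = snk_bypass K then total_demand K - ?d else 0)
        + (\<Sum>q\<in>level_paths K. if e = src_link K \<or> e \<in> set q then level_path_flow K ?d q else 0)"
    by (simp add: sum_price_paths cong: if_cong)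
  also have "\<dots> = price_flow K l e"
  proof (cases "e \<in> level_edges K")
    case True
    then show ?thesis
      using gadget_edges_not_in_level_edges[of K]
      by (auto simp: price_flow_def level_flow_eq_sum_paths)
  next
    case False
    then have "(\<Sum>q\<in>level_paths K. if e \<in> set q then level_path_flow K ?d q else 0) = 0"
      using level_paths_subset by (intro sum.neutral) auto
    then show ?thesis
      using False level_flow_outside[OF False] sum_level_path_flow[of K ?d]
      by (auto simp: price_flow_def)
  qed
  finally show ?thesis ..
qed

definition price_potential :: "nat \<Rightarrow> real \<Rightarrow> nat \<Rightarrow> real" where
  "price_potential K l v = (let d = level_demand K l in
     if v = src_vertex (Suc K) then 0 else if v = src_vertex K then d + l
     else if l < total_demand K then d + l + level_potential K d v else total_demand K)"

lemma price_potential_level_verts: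
  assumes "v \<in> level_verts K"
  shows "l < total_demand K \<Longrightarrow>
      price_potential K l v = level_demand K l + l + level_potential K (level_demand K l) v"
    and "total_demand K \<le> l \<Longrightarrow> v \<noteq> src_vertex K \<Longrightarrow> price_potential K l v = total_demand K"
    and "total_demand K \<le> l \<Longrightarrow> total_demand K \<le> price_potential K l v"
proof -
  have "v \<noteq> src_vertex (Suc K)" using assms by auto
  moreover have "total_demand K \<le> l \<Longrightarrow> level_demand K l = 0"
    using cost_curve.priced_demand_eq_0[OF level_cost_curve] by (simp add: level_demand_def)
  ultimately show "l < total_demand K \<Longrightarrow>
      price_potential K l v = level_demand K l + l + level_potential K (level_demand K l) v"
    "total_demand K \<le> l \<Longrightarrow> v \<noteq> src_vertex K \<Longrightarrow> price_potential K l v = total_demand K"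
    "total_demand K \<le> l \<Longrightarrow> total_demand K \<le> price_potential K l v"
    by (auto simp: price_potential_def Let_def)
qed

lemma tight_price_potential_level_edges:
  assumes "0 \<le> l"
  shows "tight_potential (price_potential K l) (price_flow K l) (level_edges K)"
proof (cases "l < total_demand K")
  case True
  let ?d = "level_demand K l"
  have "tight_potential (price_potential K l) (price_flow K l) (level_edges K) \<longleftrightarrow>
      tight_potential (\<lambda>v. ?d + l + level_potential K ?d v) (level_flow K ?d) (level_edges K)"
    using True edge_ends_in_level_verts
    by (intro tight_potential_cong) (simp_all add: price_potential_level_verts price_flow_level_edges)
  then show ?thesis
    using tight_potential_level level_demand_bounds[OF assms] tight_potential_shift by blast
next
  case False
  then have no_flow: "price_flow K l e = 0" if "e \<in> level_edges K" for e
    using cost_curve.priced_demand_eq_0[OF level_cost_curve] that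
    by (simp add: price_flow_level_edges level_demand_def)
  have "total_demand K \<le> l" using False by simp
  show ?thesis
    unfolding tight_potential_def
  proof
    fix e assume e: "e \<in> level_edges K"
    show "price_potential K l (edge_head e) \<le> price_potential K l (edge_tail e)
        + edge_slope e * price_flow K l e + edge_offset e \<and>
      (0 < price_flow K l e \<longrightarrow> price_potential K l (edge_head e) =
        price_potential K l (edge_tail e) + edge_slope e * price_flow K l e + edge_offset e)"
      using edge_ends_in_level_verts[OF e] no_flow[OF e] edge_offset_nonneg[of e]
        price_potential_level_verts(2)[OF _ \<open>total_demand K \<le> l\<close>]
        price_potential_level_verts(3)[OF edge_ends_in_level_verts(1)[OF e] \<open>total_demand K \<le> l\<close>]
      by simp
  qed
qed

lemma price_potential_network:
  assumes "0 \<le> l" and "e \<in> edges (price_network K)"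
  defines "N \<equiv> price_network K" and "\<pi> \<equiv> price_potential K l" and "x \<equiv> price_flow K l"
  shows "\<pi> (ehead N e) \<le> \<pi> (etail N e) + edge_cost N l x e"
    and "0 < x e \<Longrightarrow> \<pi> (ehead N e) = \<pi> (etail N e) + edge_cost N l x e"
proof -
  let ?d = "level_demand K l"
  have "\<pi> (ehead N e) \<le> \<pi> (etail N e) + edge_cost N l x e \<and>
      (0 < x e \<longrightarrow> \<pi> (ehead N e) = \<pi> (etail N e) + edge_cost N l x e)"
  proof -
    consider "e \<in> level_edges K" | "e = src_link K" | "e = snk_bypass K"
      using assms(2) by (auto simp: N_def)
    then show ?thesis
    proof cases
      case 1
      then have "\<pi> (edge_head e) \<le> \<pi> (edge_tail e) + edge_slope e * x e + edge_offset e \<and>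
          (0 < x e \<longrightarrow> \<pi> (edge_head e) = \<pi> (edge_tail e) + edge_slope e * x e + edge_offset e)"
        using tight_price_potential_level_edges[OF assms(1), of K]
        unfolding tight_potential_def \<pi>_def x_def by blast
      then show ?thesis using 1 by (simp add: N_def edge_cost_price_network add.assoc)
    next
      case 2
      then show ?thesis
        by (simp add: N_def \<pi>_def x_def edge_cost_price_network price_potential_def price_flow_def)
    next
      case 3
      have "l < total_demand K \<Longrightarrow> 2 * ?d + level_cost K ?d = total_demand K - l"
        using cost_curve.priced_demand(2)[OF level_cost_curve] by (simp add: level_demand_def)
      moreover have "total_demand K \<le> l \<Longrightarrow> ?d = 0"
        using cost_curve.priced_demand_eq_0[OF level_cost_curve] by (simp add: level_demand_def)
      ultimately show ?thesis
        using 3 by (auto simp: N_def \<pi>_def x_def edge_cost_price_network price_potential_def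
            price_flow_def Let_def)
    qed
  qed
  then show "\<pi> (ehead N e) \<le> \<pi> (etail N e) + edge_cost N l x e"
    "0 < x e \<Longrightarrow> \<pi> (ehead N e) = \<pi> (etail N e) + edge_cost N l x e" by simp_all
qed

lemma wardrop_eq_price_flow:
  assumes "0 \<le> l"
  shows "wardrop_eq (price_network K) l (price_flow K l)"
proof (rule wardrop_eq_if_tight_potential[OF valid_price_network _ price_paths_st_paths])
  show "finite (price_paths K)" by (simp add: price_paths_def finite_level_paths)
  show "sum (price_path_flow K l) (price_paths K) = dem (price_network K)"
    by (simp add: sum_price_path_flow)
  show "\<forall>p. p \<notin> price_paths K \<longrightarrow> price_path_flow K l p = 0" "\<forall>p. 0 \<le> price_path_flow K l p"
    "\<forall>e. price_flow K l e = (\<Sum>p\<in>price_paths K. if e \<in> set p then price_path_flow K l p else 0)"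
    using price_path_flow_support price_path_flow_nonneg[OF assms] price_flow_eq_sum_paths by simp_all
  show "\<forall>e\<in>edges (price_network K). price_potential K l (ehead (price_network K) e)
      \<le> price_potential K l (etail (price_network K) e) + edge_cost (price_network K) l (price_flow K l) e"
    "\<forall>e\<in>edges (price_network K). 0 < price_flow K l e \<longrightarrow>
      price_potential K l (ehead (price_network K) e)
      = price_potential K l (etail (price_network K) e) + edge_cost (price_network K) l (price_flow K l) e"
    using price_potential_network[OF assms] by simp_all
qed

lemma breakpoint_price_flow:
  assumes "0 < d" "2 * d + level_cost K d < total_demand K"
    and not_affine: "\<not> affine_near (level_edges K) (level_flow K) d"
  shows "breakpoint (price_network K) (price_flow K) (total_demand K - 2 * d - level_cost K d)"
proof -
  interpret cost_curve "level_cost K" by (rule level_cost_curve)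
  let ?Dt = "total_demand K"
  let ?l = "?Dt - 2 * d - level_cost K d"
  have l: "0 < ?l" "level_demand K ?l = d"
    using priced_demand_inverse[OF assms(1,2)] by (simp_all add: level_demand_def)
  have "?l < ?Dt" using assms(1) nonneg[of d] by simp
  define \<eta> where "\<eta> = min ?l (?Dt - ?l)"
  have "0 < \<eta>" using l(1) \<open>?l < ?Dt\<close> by (simp add: \<eta>_def)
  have "inj_on (level_demand K) {l. \<bar>l - ?l\<bar> < \<eta>}"
    unfolding level_demand_def
    by (rule inj_on_subset[OF inj_on_priced_demand]) (auto simp: \<eta>_def abs_less_iff)
  have "\<not> affine_near (edges (price_network K)) (price_flow K) ?l"
  proof
    assume "affine_near (edges (price_network K)) (price_flow K) ?l"
    then have "affine_near (level_edges K) (level_flow K) (level_demand K ?l)"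
    proof (rule affine_near_reparam[where F = "{src_link K}" and w = "\<lambda>_. 1"])
      show "\<forall>l. \<bar>l - ?l\<bar> < \<eta> \<longrightarrow> level_demand K l = (\<Sum>e\<in>{src_link K}. 1 * price_flow K l e)"
        by (simp add: price_flow_def)
    qed (use \<open>0 < \<eta>\<close> \<open>inj_on (level_demand K) _\<close> in \<open>auto simp: price_flow_level_edges\<close>)
    then show False using not_affine l(2) by simp
  qed
  then show ?thesis using l(1) by (simp add: breakpoint_iff_not_affine_near)
qed

lemma price_flow_breakpoints:
  "\<exists>B. finite B \<and> 2 ^ K - 1 \<le> card B \<and> (\<forall>l\<in>B. breakpoint (price_network K) (price_flow K) l)"
proof -
  interpret cost_curve "level_cost K" by (rule level_cost_curve)
  obtain B where "finite B" and card_B: "2 ^ K - 1 \<le> card B"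
    and B: "\<And>d. d \<in> B \<Longrightarrow> 0 < d \<and> 2 * d + level_cost K d \<le> 9 * 16 ^ K \<and>
        \<not> affine_near (level_edges K) (level_flow K) d"
    using level_breakpoints unfolding bounded_breakpoint_def by blast
  let ?h = "\<lambda>d. total_demand K - 2 * d - level_cost K d"
  have below: "2 * d + level_cost K d < total_demand K" if "d \<in> B" for d
    using B[OF that] by (simp add: total_demand_def)
  have "inj_on ?h B"
    by (rule inj_on_subset[OF inj_on_priced_demand_inverse]) (use B in force)
  then have "2 ^ K - 1 \<le> card (?h ` B)" using card_B by (simp add: card_image)
  moreover have "\<forall>l\<in>?h ` B. breakpoint (price_network K) (price_flow K) l"
    using B below breakpoint_price_flow by blast
  ultimately show ?thesis using \<open>finite B\<close> by blast
qed

theorem lemma5p6: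
  shows "\<exists>C::nat. \<forall>k::nat. \<exists>(N::network) (x :: real \<Rightarrow> nat \<Rightarrow> real).
     valid_network N \<and>
     card (verts N) \<le> C * (k + 1) \<and> card (edges N) \<le> C * (k + 1) \<and>
     (\<forall>lam>0. wardrop_eq N lam (x lam) \<and>
        (\<forall>y. wardrop_eq N lam y \<longrightarrow> (\<forall>e\<in>edges N. y e = x lam e))) \<and>
     (\<exists>B. finite B \<and> card B \<ge> 2 ^ (k + 1) \<and> (\<forall>l\<in>B. breakpoint N x l))"
proof (intro exI[of _ 11] allI)
  fix k :: nat
  let ?N = "price_network (k + 2)" and ?x = "price_flow (k + 2)"
  have "card (verts ?N) \<le> 11 * (k + 1)" "card (edges ?N) \<le> 11 * (k + 1)"
    unfolding card_verts_price_network card_edges_price_network by simp_all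
  moreover have "\<forall>lam>0. wardrop_eq ?N lam (?x lam) \<and>
      (\<forall>y. wardrop_eq ?N lam y \<longrightarrow> (\<forall>e\<in>edges ?N. y e = ?x lam e))"
  proof (intro allI impI)
    fix lam :: real assume "0 < lam"
    then have "wardrop_eq ?N lam (?x lam)" using wardrop_eq_price_flow by simp
    then show "wardrop_eq ?N lam (?x lam) \<and>
        (\<forall>y. wardrop_eq ?N lam y \<longrightarrow> (\<forall>e\<in>edges ?N. y e = ?x lam e))"
      using wardrop_eq_unique[OF valid_price_network ta_price_network_pos] by blast
  qed
  moreover obtain B where "finite B" "2 ^ (k + 2) - 1 \<le> card B" "\<forall>l\<in>B. breakpoint ?N ?x l"
    using price_flow_breakpoints by blast
  moreover have "(2::nat) ^ (k + 1) \<le> 2 ^ (k + 2) - 1" by simp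
  then have "2 ^ (k + 1) \<le> card B" using \<open>2 ^ (k + 2) - 1 \<le> card B\<close> by (rule le_trans)
  ultimately show "\<exists>N x. valid_network N \<and>
     card (verts N) \<le> 11 * (k + 1) \<and> card (edges N) \<le> 11 * (k + 1) \<and>
     (\<forall>lam>0. wardrop_eq N lam (x lam) \<and>
        (\<forall>y. wardrop_eq N lam y \<longrightarrow> (\<forall>e\<in>edges N. y e = x lam e))) \<and>
     (\<exists>B. finite B \<and> card B \<ge> 2 ^ (k + 1) \<and> (\<forall>l\<in>B. breakpoint N x l))"
    using valid_price_network by (intro exI[of _ ?N] exI[of _ ?x] conjI exI[of _ B]) simp_all
qed

end
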